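(* Assume the standing assumptions in the context, and let $f\in AC([T,x_0))$. Then $$\Big(\frac{f(x)}{\phi_2(x)}\Big)'=\Big(\frac{\phi_1(x)}{\phi_2(x)}\Big)'f_1^*(x)$$ at every $x\in I$ where $f$ is differentiable. (I) For a real number $a_1$ the following are equivalent: (i) $\lim_{x\to x_0}f_1^*(x)=a_1$; (ii) $\big(f(x)/\phi_2(x)\big)'=a_1\big(\phi_1(x)/\phi_2(x)\big)'+o\big((\phi_1(x)/\phi_2(x))'\big)$ as $x\to x_0$; (iii) as $x\to x_0$ both $f(x)=a_1\phi_1(x)+o(\phi_1(x))$ and $\big(f(x)/\phi_2(x)\big)'=a_1\big(\phi_1(x)/\phi_2(x)\big)'+o\big((\phi_1(x)/\phi_2(x))'\big)$. (II) For a real number $a_1$, the pair of conditions $$\lim_{x\to x_0}f_1^*(x)=a_1,\qquad \int_T^{x_0}\Big(\frac{\phi_1(t)}{\phi_2(t)}\Big)'[f_1^*(t)-a_1]\,dt\ \text{ convergent}$$ holds if and only if there is a real number $a_2$ such that, as $x\to x_0$, $$f(x)=a_1\phi_1(x)+a_2\phi_2(x)+o(\phi_2(x)),\qquad \Big(\frac{f(x)}{\phi_2(x)}\Big)'=a_1\Big(\frac{\phi_1(x)}{\phi_2(x)}\Big)'+o\Big(\Big(\frac{\phi_1(x)}{\phi_2(x)}\Big)'\Big).$$ In this case $$f(x)=a_1\phi_1(x)+a_2\phi_2(x)-\phi_2(x)\int_x^{x_0}\Big(\frac{\phi_1(t)}{\phi_2(t)}\Big)'[f_1^*(t)-a_1]\,dt,\qquad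 x\in[T,x_0).$$
   Context: Let $x_0\in\mathbb{R}\cup\{+\infty\}$, $T\in\mathbb{R}$ with $T<x_0$, and $I:=[T,x_0)$. All limits and asymptotic relations "as $x\to x_0$" are taken for $x\in I$; for functions defined only almost everywhere, over the points where they are defined. For differentiable $g,h$ put $W(g,h;x):=g(x)h'(x)-g'(x)h(x)$. Standing assumptions: $\phi_1,\phi_2\in C^1(I)$; $\phi_2(x)=o(\phi_1(x))$ as $x\to x_0$; $\phi_1(x)\ne0$, $\phi_2(x)\ne0$ for all $x\in I$; $W(x):=W(\phi_1,\phi_2;x)\ne0$ for all $x\in I$. $AC([T,x_0))$ denotes functions absolutely continuous on every compact subinterval of $I$. For such $f$ and every $t\in I$ where $f$ is differentiable define $f_1^*(t):=W(f,\phi_2;t)/W(t)$. *)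

theory Defs
  imports "HOL-Analysis.Analysis" "HOL-Library.Landau_Symbols"
begin

definition ivl :: "real \<Rightarrow> ereal \<Rightarrow> real set" where
  "ivl T x0 = {x. T \<le> x \<and> ereal x < x0}"

definition to_x0 :: "ereal \<Rightarrow> real filter" where
  "to_x0 x0 = (if x0 = PInfty then at_top else at_left (real_of_ereal x0))"

text \<open>Derivative relative to the interval I (one-sided at the endpoint T).\<close>
definition dI :: "real set \<Rightarrow> (real \<Rightarrow> real) \<Rightarrow> real \<Rightarrow> real" where
  "dI I g x = vector_derivative g (at x within I)"

definition Wr :: "real set \<Rightarrow> (real \<Rightarrow> real) \<Rightarrow> (real \<Rightarrow> real) \<Rightarrow> real \<Rightarrow> real" where
  "Wr I g h x = g x * dI I h x - dI I g x * h x"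

text \<open>Absolute continuity on a compact interval [c,d] (classical definition via
  finite families of non-overlapping subintervals, listed in increasing order).\<close>
definition abs_cont_on :: "(real \<Rightarrow> real) \<Rightarrow> real \<Rightarrow> real \<Rightarrow> bool" where
  "abs_cont_on f c d \<longleftrightarrow>
     (\<forall>\<epsilon>>0. \<exists>\<delta>>0. \<forall>(n::nat) (a::nat \<Rightarrow> real) (b::nat \<Rightarrow> real).
        (\<forall>k<n. c \<le> a k \<and> a k \<le> b k \<and> b k \<le> d) \<and>
        (\<forall>k. Suc k < n \<longrightarrow> b k \<le> a (Suc k)) \<and>
        (\<Sum>k<n. b k - a k) < \<delta> \<longrightarrow> (\<Sum>k<n. \<bar>f (b k) - f (a k)\<bar>) < \<epsilon>)"

definition AC_loc :: "real \<Rightarrow> ereal \<Rightarrow> (real \<Rightarrow> real) \<Rightarrow> bool" where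
  "AC_loc T x0 f \<longleftrightarrow> (\<forall>c d. c \<in> ivl T x0 \<longrightarrow> d \<in> ivl T x0 \<longrightarrow> c \<le> d \<longrightarrow> abs_cont_on f c d)"

definition imp_conv :: "ereal \<Rightarrow> real \<Rightarrow> (real \<Rightarrow> real) \<Rightarrow> bool" where
  "imp_conv x0 a h \<longleftrightarrow> (\<forall>y. a \<le> y \<and> ereal y < x0 \<longrightarrow> h integrable_on {a..y})
      \<and> (\<exists>L. ((\<lambda>y. integral {a..y} h) \<longlongrightarrow> L) (to_x0 x0))"

definition imp_int :: "ereal \<Rightarrow> real \<Rightarrow> (real \<Rightarrow> real) \<Rightarrow> real" where
  "imp_int x0 a h = Lim (to_x0 x0) (\<lambda>y. integral {a..y} h)"

end

theory Submission
  imports Defs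
begin

text \<open>Write \<open>f = a \<phi>\<^sub>1 + U \<phi>\<^sub>2\<close> with \<open>U = f/\<phi>\<^sub>2 - a \<phi>\<^sub>1/\<phi>\<^sub>2\<close>. Wherever \<open>f\<close> is differentiable,
  \<open>U' = q (f\<^sub>1\<^sup>* - a)\<close> with \<open>q = (\<phi>\<^sub>1/\<phi>\<^sub>2)' = -W/\<phi>\<^sub>2\<^sup>2\<close>, so all statements about \<open>f\<^sub>1\<^sup>*\<close> become
  statements about \<open>U'\<close> relative to \<open>q\<close>. As \<open>W\<close> does not vanish, \<open>q\<close> has constant sign, and
  \<open>\<phi>\<^sub>2 = o(\<phi>\<^sub>1)\<close> means \<open>\<bar>\<phi>\<^sub>1/\<phi>\<^sub>2\<bar> \<rightarrow> \<infinity>\<close>; integrating \<open>U' = o(q)\<close> therefore gives \<open>U = o(\<phi>\<^sub>1/\<phi>\<^sub>2)\<close>,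
  i.e. \<open>f - a \<phi>\<^sub>1 = o(\<phi>\<^sub>1)\<close>. Likewise \<open>U\<close> tends to some \<open>a\<^sub>2\<close> exactly when the improper integral
  of \<open>U'\<close> converges, and then \<open>U(x) = a\<^sub>2 - \<integral>\<^sub>x\<^sup>x\<^sup>0 U'\<close>.

  Integrating \<open>U'\<close> requires the fundamental theorem of calculus for the absolutely continuous
  function \<open>U\<close>. It rests on the Jordan decomposition into monotone functions, Lebesgue's theorem
  that these are differentiable almost everywhere (proved with Vitali coverings), and a gauge
  argument for the Henstock--Kurzweil integral that makes the exceptional null set harmless.\<close>

section \<open>Absolutely continuous functions on a compact interval\<close>

definition ordered_intervals :: "real \<Rightarrow> real \<Rightarrow> nat \<Rightarrow> (nat \<Rightarrow> real) \<Rightarrow> (nat \<Rightarrow> real) \<Rightarrow> bool" where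
  "ordered_intervals c d n a b \<longleftrightarrow>
     (\<forall>k<n. c \<le> a k \<and> a k \<le> b k \<and> b k \<le> d) \<and> (\<forall>k. Suc k < n \<longrightarrow> b k \<le> a (Suc k))"

lemma abs_cont_on_iff:
  "abs_cont_on f c d \<longleftrightarrow> (\<forall>e>0. \<exists>\<delta>>0. \<forall>n a b. ordered_intervals c d n a b \<longrightarrow>
     (\<Sum>k<n. b k - a k) < \<delta> \<longrightarrow> (\<Sum>k<n. \<bar>f (b k) - f (a k)\<bar>) < e)"
  unfolding abs_cont_on_def ordered_intervals_def by (simp add: imp_conjL)

lemma abs_cont_onD:
  assumes "abs_cont_on f c d" "e > 0"
  obtains \<delta> where "\<delta> > 0" "\<And>n a b. ordered_intervals c d n a b \<Longrightarrow>
     (\<Sum>k<n. b k - a k) < \<delta> \<Longrightarrow> (\<Sum>k<n. \<bar>f (b k) - f (a k)\<bar>) < e"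
proof -
  obtain \<delta> where "\<delta> > 0" and "\<forall>n a b. ordered_intervals c d n a b \<longrightarrow>
     (\<Sum>k<n. b k - a k) < \<delta> \<longrightarrow> (\<Sum>k<n. \<bar>f (b k) - f (a k)\<bar>) < e"
    using assms unfolding abs_cont_on_iff by blast
  then show ?thesis using that by blast
qed

lemma abs_cont_on_ident: "abs_cont_on (\<lambda>x. x) c d"
  unfolding abs_cont_on_iff
proof (intro allI impI)
  fix e :: real assume "e > 0"
  show "\<exists>\<delta>>0. \<forall>n a b. ordered_intervals c d n a b \<longrightarrow> (\<Sum>k<n. b k - a k) < \<delta> \<longrightarrow> (\<Sum>k<n. \<bar>b k - a k\<bar>) < e"
  proof (intro exI[of _ e] conjI allI impI)
    fix n a b assume "ordered_intervals c d n a b" "(\<Sum>k<n. b k - a k) < e"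
    moreover have "(\<Sum>k<n. \<bar>b k - a k\<bar>) = (\<Sum>k<n. b k - a k)"
      using \<open>ordered_intervals c d n a b\<close> by (intro sum.cong) (auto simp: ordered_intervals_def)
    ultimately show "(\<Sum>k<n. \<bar>b k - a k\<bar>) < e" by simp
  qed fact
qed

lemma abs_cont_on_dominated:
  assumes f: "abs_cont_on f c d" and g: "abs_cont_on g c d" and M: "M \<ge> 0"
    and dom: "\<And>x y. x \<in> {c..d} \<Longrightarrow> y \<in> {c..d} \<Longrightarrow> \<bar>h y - h x\<bar> \<le> M * (\<bar>f y - f x\<bar> + \<bar>g y - g x\<bar>)"
  shows "abs_cont_on h c d"
  unfolding abs_cont_on_iff
proof (intro allI impI)
  fix e :: real assume e: "e > 0"
  define e' where "e' = e / (2 * (M + 1))"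
  have e': "e' > 0" "M * (2 * e') < e"
    using e M by (auto simp: e'_def field_simps)
  obtain \<delta>f where \<delta>f: "\<delta>f > 0" "\<And>n a b. ordered_intervals c d n a b \<Longrightarrow>
     (\<Sum>k<n. b k - a k) < \<delta>f \<Longrightarrow> (\<Sum>k<n. \<bar>f (b k) - f (a k)\<bar>) < e'"
    using abs_cont_onD[OF f e'(1)] by blast
  obtain \<delta>g where \<delta>g: "\<delta>g > 0" "\<And>n a b. ordered_intervals c d n a b \<Longrightarrow>
     (\<Sum>k<n. b k - a k) < \<delta>g \<Longrightarrow> (\<Sum>k<n. \<bar>g (b k) - g (a k)\<bar>) < e'"
    using abs_cont_onD[OF g e'(1)] by blast
  show "\<exists>\<delta>>0. \<forall>n a b. ordered_intervals c d n a b \<longrightarrow>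
     (\<Sum>k<n. b k - a k) < \<delta> \<longrightarrow> (\<Sum>k<n. \<bar>h (b k) - h (a k)\<bar>) < e"
  proof (intro exI[of _ "min \<delta>f \<delta>g"] conjI allI impI)
    fix n a b assume ab: "ordered_intervals c d n a b" "(\<Sum>k<n. b k - a k) < min \<delta>f \<delta>g"
    have "(\<Sum>k<n. \<bar>h (b k) - h (a k)\<bar>) \<le> (\<Sum>k<n. M * (\<bar>f (b k) - f (a k)\<bar> + \<bar>g (b k) - g (a k)\<bar>))"
      using ab(1) by (intro sum_mono dom) (auto simp: ordered_intervals_def)
    also have "\<dots> = M * ((\<Sum>k<n. \<bar>f (b k) - f (a k)\<bar>) + (\<Sum>k<n. \<bar>g (b k) - g (a k)\<bar>))"
      by (simp add: sum_distrib_left sum.distrib distrib_left)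
    also have "\<dots> \<le> M * (2 * e')"
      using \<delta>f(2)[OF ab(1)] \<delta>g(2)[OF ab(1)] ab(2) M by (intro mult_left_mono) auto
    finally show "(\<Sum>k<n. \<bar>h (b k) - h (a k)\<bar>) < e" using e' by linarith
  qed (use \<delta>f \<delta>g in auto)
qed

lemma abs_cont_on_lipschitz:
  assumes L: "L \<ge> 0" and lip: "\<And>x y. x \<in> {c..d} \<Longrightarrow> y \<in> {c..d} \<Longrightarrow> \<bar>g y - g x\<bar> \<le> L * \<bar>y - x\<bar>"
  shows "abs_cont_on g c d"
proof (rule abs_cont_on_dominated[OF abs_cont_on_ident abs_cont_on_ident L])
  fix x y assume "x \<in> {c..d}" "y \<in> {c..d}"
  then have "\<bar>g y - g x\<bar> \<le> L * \<bar>y - x\<bar>" by (rule lip)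
  also have "\<dots> \<le> L * (\<bar>y - x\<bar> + \<bar>y - x\<bar>)" using L by (intro mult_left_mono) auto
  finally show "\<bar>g y - g x\<bar> \<le> L * (\<bar>y - x\<bar> + \<bar>y - x\<bar>)" .
qed

lemma abs_cont_on_diff:
  assumes "abs_cont_on f c d" "abs_cont_on g c d"
  shows "abs_cont_on (\<lambda>x. f x - g x) c d"
  by (rule abs_cont_on_dominated[OF assms, of 1]) auto

lemma abs_cont_on_imp_uniformly_continuous_on:
  assumes "abs_cont_on f c d"
  shows "uniformly_continuous_on {c..d} f"
  unfolding uniformly_continuous_on_def
proof (intro allI impI)
  fix e :: real assume "e > 0"
  then obtain \<delta> where \<delta>: "\<delta> > 0" "\<And>n a b. ordered_intervals c d n a b \<Longrightarrow>
     (\<Sum>k<n. b k - a k) < \<delta> \<Longrightarrow> (\<Sum>k<n. \<bar>f (b k) - f (a k)\<bar>) < e"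
    using abs_cont_onD[OF assms] by blast
  have close: "dist (f y) (f x) < e" if "x \<in> {c..d}" "y \<in> {c..d}" "x \<le> y" "y - x < \<delta>" for x y
    using \<delta>(2)[of 1 "\<lambda>_. x" "\<lambda>_. y"] that by (simp add: ordered_intervals_def dist_real_def)
  show "\<exists>\<delta>>0. \<forall>x\<in>{c..d}. \<forall>y\<in>{c..d}. dist y x < \<delta> \<longrightarrow> dist (f y) (f x) < e"
  proof (intro exI[of _ \<delta>] conjI ballI impI)
    fix x y assume xy: "x \<in> {c..d}" "y \<in> {c..d}" "dist y x < \<delta>"
    show "dist (f y) (f x) < e"
    proof (cases "x \<le> y")
      case True then show ?thesis using close[of x y] xy by (simp add: dist_real_def)
    next
      case False then show ?thesis using close[of y x] xy by (simp add: dist_real_def dist_commute)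
    qed
  qed (rule \<delta>(1))
qed

lemma abs_cont_on_bounded:
  assumes "abs_cont_on f c d"
  obtains M where "M \<ge> 0" "\<And>x. x \<in> {c..d} \<Longrightarrow> \<bar>f x\<bar> \<le> M"
proof -
  have "compact (f ` {c..d})"
    using abs_cont_on_imp_uniformly_continuous_on[OF assms]
    by (intro compact_continuous_image uniformly_continuous_imp_continuous) auto
  then obtain M where "\<forall>y\<in>f ` {c..d}. norm y \<le> M" using compact_imp_bounded bounded_iff by metis
  then show ?thesis using that[of "max M 0"] by force
qed

lemma abs_cont_on_mult:
  assumes f: "abs_cont_on f c d" and g: "abs_cont_on g c d"
  shows "abs_cont_on (\<lambda>x. f x * g x) c d"
proof -
  obtain Mf where Mf: "Mf \<ge> 0" "\<And>x. x \<in> {c..d} \<Longrightarrow> \<bar>f x\<bar> \<le> Mf" using abs_cont_on_bounded[OF f] by blast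
  obtain Mg where Mg: "Mg \<ge> 0" "\<And>x. x \<in> {c..d} \<Longrightarrow> \<bar>g x\<bar> \<le> Mg" using abs_cont_on_bounded[OF g] by blast
  show ?thesis
  proof (rule abs_cont_on_dominated[OF f g, of "Mf + Mg"])
    fix x y assume xy: "x \<in> {c..d}" "y \<in> {c..d}"
    have "f y * g y - f x * g x = f y * (g y - g x) + g x * (f y - f x)"
      by (simp add: algebra_simps)
    then have "\<bar>f y * g y - f x * g x\<bar> \<le> \<bar>f y\<bar> * \<bar>g y - g x\<bar> + \<bar>g x\<bar> * \<bar>f y - f x\<bar>"
      by (metis abs_mult abs_triangle_ineq)
    also have "\<dots> \<le> Mf * \<bar>g y - g x\<bar> + Mg * \<bar>f y - f x\<bar>"
      using Mf Mg xy by (intro add_mono mult_right_mono) auto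
    also have "\<dots> \<le> (Mf + Mg) * (\<bar>f y - f x\<bar> + \<bar>g y - g x\<bar>)"
      using Mf Mg by (simp add: algebra_simps)
    finally show "\<bar>f y * g y - f x * g x\<bar> \<le> (Mf + Mg) * (\<bar>f y - f x\<bar> + \<bar>g y - g x\<bar>)" .
  qed (use Mf Mg in auto)
qed

lemma abs_cont_on_has_derivative_continuous:
  assumes der: "\<And>x. x \<in> S \<Longrightarrow> (g has_real_derivative g' x) (at x within S)"
    and cont: "continuous_on S g'" and sub: "{c..d} \<subseteq> S"
  shows "abs_cont_on g c d"
proof -
  have "compact (g' ` {c..d})" using continuous_on_subset[OF cont sub] by (intro compact_continuous_image) auto
  then obtain B where B: "\<forall>y\<in>g' ` {c..d}. norm y \<le> B" using compact_imp_bounded bounded_iff by metis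
  show ?thesis
  proof (rule abs_cont_on_lipschitz[of "max B 0"])
    fix x y assume xy: "x \<in> {c..d}" "y \<in> {c..d}"
    have "norm (g y - g x) \<le> max B 0 * norm (y - x)"
    proof (rule field_differentiable_bound[of "{c..d}"])
      fix z assume z: "z \<in> {c..d}"
      show "(g has_field_derivative g' z) (at z within {c..d})" using der[of z] sub z DERIV_subset by blast
      show "norm (g' z) \<le> max B 0" using B z by force
    qed (use xy in auto)
    then show "\<bar>g y - g x\<bar> \<le> max B 0 * \<bar>y - x\<bar>" by simp
  qed simp
qed

fun variation_sum :: "(real \<Rightarrow> real) \<Rightarrow> real list \<Rightarrow> real" where
  "variation_sum f (a # b # xs) = \<bar>f b - f a\<bar> + variation_sum f (b # xs)"
| "variation_sum f _ = 0"

lemma variation_sum_append: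
  "variation_sum f (xs @ y # ys) = variation_sum f (xs @ [y]) + variation_sum f (y # ys)"
proof (induction xs)
  case (Cons a xs)
  then show ?case by (cases xs) auto
qed simp

lemma variation_sum_snoc:
  "variation_sum f (xs @ [a, b]) = variation_sum f (xs @ [a]) + \<bar>f b - f a\<bar>"
  using variation_sum_append[of f xs a "[b]"] by simp

lemma variation_sum_split_le:
  assumes "xs \<noteq> []" "ys \<noteq> []"
  shows "variation_sum f (xs @ ys) \<le> variation_sum f (xs @ [m]) + variation_sum f (m # ys)"
proof -
  obtain xs' l where xs: "xs = xs' @ [l]" using assms(1) by (metis rev_exhaust)
  obtain h ys' where ys: "ys = h # ys'" using assms(2) by (cases ys) auto
  have "variation_sum f (xs @ ys) = variation_sum f (xs' @ [l]) + \<bar>f h - f l\<bar> + variation_sum f (h # ys')"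
    using variation_sum_append[of f "xs' @ [l]" h ys'] variation_sum_snoc[of f xs' l h] by (simp add: xs ys)
  moreover have "variation_sum f (xs @ [m]) = variation_sum f (xs' @ [l]) + \<bar>f m - f l\<bar>"
    using variation_sum_snoc[of f xs' l m] by (simp add: xs)
  moreover have "variation_sum f (m # ys) = \<bar>f h - f m\<bar> + variation_sum f (h # ys')"
    by (simp add: ys)
  moreover have "\<bar>f h - f l\<bar> \<le> \<bar>f m - f l\<bar> + \<bar>f h - f m\<bar>" by arith
  ultimately show ?thesis by linarith
qed

lemma variation_sum_conv_sum:
  "variation_sum f L = (\<Sum>k<length L - 1. \<bar>f (L ! Suc k) - f (L ! k)\<bar>)"
proof (induction f L rule: variation_sum.induct)
  case (1 f a b xs)
  have "length (a # b # xs) - 1 = Suc (length (b # xs) - 1)" by simp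
  then show ?case using 1 by (simp only: sum.lessThan_Suc_shift) simp
qed auto

lemma sum_nth_differences:
  fixes L :: "real list"
  assumes "L \<noteq> []"
  shows "(\<Sum>k<length L - 1. L ! Suc k - L ! k) = last L - hd L"
  using assms
proof (induction L)
  case (Cons a L)
  show ?case
  proof (cases L)
    case (Cons b L')
    have "length (a # L) - 1 = Suc (length L - 1)" using Cons by simp
    then have "(\<Sum>k<length (a # L) - 1. (a # L) ! Suc k - (a # L) ! k)
        = (L ! 0 - a) + (\<Sum>k<length L - 1. L ! Suc k - L ! k)"
      by (simp only: sum.lessThan_Suc_shift) simp
    then show ?thesis using Cons.IH Cons by simp
  qed simp
qed simp

lemma abs_cont_on_variation_sum:
  assumes "abs_cont_on f c d" "e > 0"
  obtains \<delta> where "\<delta> > 0" "\<And>L. sorted L \<Longrightarrow> L \<noteq> [] \<Longrightarrow> set L \<subseteq> {c..d}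
       \<Longrightarrow> last L - hd L < \<delta> \<Longrightarrow> variation_sum f L < e"
proof -
  obtain \<delta> where \<delta>: "\<delta> > 0" "\<And>n a b. ordered_intervals c d n a b \<Longrightarrow>
     (\<Sum>k<n. b k - a k) < \<delta> \<Longrightarrow> (\<Sum>k<n. \<bar>f (b k) - f (a k)\<bar>) < e"
    using abs_cont_onD[OF assms] by blast
  show ?thesis
  proof (rule that[OF \<delta>(1)])
    fix L :: "real list" assume L: "sorted L" "L \<noteq> []" "set L \<subseteq> {c..d}" "last L - hd L < \<delta>"
    have "ordered_intervals c d (length L - 1) (\<lambda>k. L ! k) (\<lambda>k. L ! Suc k)"
      unfolding ordered_intervals_def
    proof (rule conjI; intro allI impI)
      fix k assume k: "k < length L - 1"
      then have "L ! k \<in> set L" "L ! Suc k \<in> set L" by auto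
      then have "c \<le> L ! k" "L ! Suc k \<le> d" using L(3) by auto
      moreover have "L ! k \<le> L ! Suc k" using L(1) k by (simp add: sorted_iff_nth_mono)
      ultimately show "c \<le> L ! k \<and> L ! k \<le> L ! Suc k \<and> L ! Suc k \<le> d" by simp
    qed simp
    then show "variation_sum f L < e"
      using \<delta>(2) sum_nth_differences[OF L(2)] L(4) by (simp add: variation_sum_conv_sum)
  qed
qed

definition partitions :: "real \<Rightarrow> real \<Rightarrow> real list set" where
  "partitions c x = {L. sorted L \<and> L \<noteq> [] \<and> hd L = c \<and> last L = x}"

lemma partitions_subset: "L \<in> partitions c x \<Longrightarrow> set L \<subseteq> {c..x}"
proof
  fix t assume L: "L \<in> partitions c x" and t: "t \<in> set L"
  from L have s: "sorted L" "L \<noteq> []" "hd L = c" "last L = x" by (auto simp: partitions_def)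
  obtain i where i: "i < length L" "t = L ! i" using t by (metis in_set_conv_nth)
  have "L ! 0 \<le> L ! i" "L ! i \<le> L ! (length L - 1)"
    using s(1) i(1) by (auto simp: sorted_iff_nth_mono)
  then show "t \<in> {c..x}" using s i by (simp add: hd_conv_nth last_conv_nth)
qed

lemma partitions_split:
  assumes L: "L \<in> partitions c x" and m: "c \<le> m" "m \<le> x"
  obtains A B where "A \<in> partitions c m" "B \<in> partitions m x"
    "variation_sum f L \<le> variation_sum f A + variation_sum f B"
proof -
  let ?A = "takeWhile (\<lambda>t. t \<le> m) L" and ?B = "dropWhile (\<lambda>t. t \<le> m) L"
  from L have s: "sorted L" "L \<noteq> []" "hd L = c" "last L = x" by (auto simp: partitions_def)
  have LAB: "L = ?A @ ?B" by simp
  have Ane: "?A \<noteq> []" and Ahd: "hd ?A = c" using s m by (cases L; auto)+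
  have sA: "sorted ?A" and sB: "sorted ?B" using s(1) by (metis LAB sorted_append)+
  have Am: "?A @ [m] \<in> partitions c m"
    unfolding partitions_def using sA Ahd Ane by (auto simp: sorted_append dest: set_takeWhileD)
  show ?thesis
  proof (cases "?B = []")
    case True
    then have "L = ?A" by (metis LAB append_Nil2)
    then have "x = m" using m s Ane by (metis last_in_set set_takeWhileD order_antisym)
    obtain A' l where "?A = A' @ [l]" using Ane by (metis rev_exhaust)
    then have "variation_sum f L \<le> variation_sum f (?A @ [m]) + variation_sum f [m]"
      using variation_sum_snoc[of f A' l m] \<open>L = ?A\<close> by simp
    moreover have "[m] \<in> partitions m x" using \<open>x = m\<close> by (simp add: partitions_def)
    ultimately show ?thesis using that Am by blast
  next
    case False
    have "m < t" if "t \<in> set ?B" for t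
    proof -
      have "\<not> hd ?B \<le> m" using False by (metis hd_dropWhile)
      moreover have "hd ?B \<le> t" using sB that by (metis list.sel(1) list.set_cases sorted_simps(2) order.refl)
      ultimately show "m < t" by simp
    qed
    then have "sorted (m # ?B)" using sB by (auto simp: less_imp_le)
    moreover have "last (m # ?B) = x" using False s(4) by (metis LAB last_ConsR last_appendR)
    ultimately have "m # ?B \<in> partitions m x" unfolding partitions_def by simp
    moreover have "variation_sum f L \<le> variation_sum f (?A @ [m]) + variation_sum f (m # ?B)"
      using variation_sum_split_le[OF Ane False, of f m] LAB by simp
    ultimately show ?thesis using that Am by blast
  qed
qed

lemma variation_sum_partitions_bounded:
  assumes AC: "abs_cont_on f c d"
  obtains M where "\<And>x L. x \<in> {c..d} \<Longrightarrow> L \<in> partitions c x \<Longrightarrow> variation_sum f L \<le> M"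
proof -
  obtain \<delta> where \<delta>: "\<delta> > 0" and small: "\<And>L. sorted L \<Longrightarrow> L \<noteq> [] \<Longrightarrow> set L \<subseteq> {c..d}
       \<Longrightarrow> last L - hd L < \<delta> \<Longrightarrow> variation_sum f L < 1"
    using abs_cont_on_variation_sum[OF AC, of 1] by auto
  \<comment> \<open>each step of length \<open>\<delta>/2\<close> adds less than \<open>1\<close> to the variation\<close>
  have step: "\<forall>x\<in>{c..d}. x \<le> c + real k * \<delta>/2 \<longrightarrow> (\<forall>L\<in>partitions c x. variation_sum f L \<le> real k)" for k
  proof (induction k)
    case 0
    show ?case
    proof (intro ballI impI)
      fix x L assume "x \<in> {c..d}" "x \<le> c + real 0 * \<delta> / 2" and L: "L \<in> partitions c x"
      then have "set L \<subseteq> {c}" using partitions_subset[OF L] by auto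
      then have "variation_sum f L = 0"
        by (induction f L rule: variation_sum.induct) auto
      then show "variation_sum f L \<le> real 0" by simp
    qed
  next
    case (Suc k)
    show ?case
    proof (intro ballI impI)
      fix x L assume x: "x \<in> {c..d}" "x \<le> c + real (Suc k) * \<delta> / 2" and L: "L \<in> partitions c x"
      show "variation_sum f L \<le> real (Suc k)"
      proof (cases "x \<le> c + real k * \<delta>/2")
        case True then show ?thesis using Suc x L by fastforce
      next
        case False
        let ?m = "c + real k * \<delta>/2"
        have m: "c \<le> ?m" "?m \<le> x" using False \<delta> by auto
        obtain A B where AB: "A \<in> partitions c ?m" "B \<in> partitions ?m x"
            "variation_sum f L \<le> variation_sum f A + variation_sum f B"
          using partitions_split[OF L m] by blast
        have "variation_sum f A \<le> real k" using Suc AB(1) m x by auto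
        moreover have "variation_sum f B < 1"
        proof (rule small)
          show "sorted B" "B \<noteq> []" using AB(2) by (auto simp: partitions_def)
          show "set B \<subseteq> {c..d}" using partitions_subset[OF AB(2)] m x by auto
          show "last B - hd B < \<delta>" using AB(2) x(2) \<delta> by (auto simp: partitions_def field_simps)
        qed
        ultimately show ?thesis using AB(3) by simp
      qed
    qed
  qed
  obtain k :: nat where "(d - c) / (\<delta>/2) \<le> real k" using real_arch_simple by blast
  then have "d \<le> c + real k * \<delta>/2" using \<delta> by (simp add: field_simps)
  then show ?thesis using that[of "real k"] step[of k] by fastforce
qed

definition total_variation :: "(real \<Rightarrow> real) \<Rightarrow> real \<Rightarrow> real \<Rightarrow> real" where
  "total_variation f c x = Sup (variation_sum f ` partitions c x)"

lemma total_variation_upper: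
  assumes "abs_cont_on f c d" "x \<in> {c..d}" "L \<in> partitions c x"
  shows "variation_sum f L \<le> total_variation f c x"
proof -
  obtain M where "\<And>x L. x \<in> {c..d} \<Longrightarrow> L \<in> partitions c x \<Longrightarrow> variation_sum f L \<le> M"
    using variation_sum_partitions_bounded[OF assms(1)] by blast
  then have "bdd_above (variation_sum f ` partitions c x)"
    using assms(2) by (intro bdd_aboveI[of _ M]) blast
  then show ?thesis unfolding total_variation_def using assms(3) by (auto intro: cSup_upper)
qed

lemma total_variation_least:
  assumes "c \<le> x" "\<And>L. L \<in> partitions c x \<Longrightarrow> variation_sum f L \<le> B"
  shows "total_variation f c x \<le> B"
proof -
  have "[c, x] \<in> partitions c x" using assms(1) by (simp add: partitions_def)
  then show ?thesis unfolding total_variation_def by (intro cSup_least) (use assms in auto)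
qed

lemma total_variation_step:
  assumes AC: "abs_cont_on f c d" and xy: "c \<le> x" "x \<le> y" "y \<le> d"
  shows "total_variation f c x + \<bar>f y - f x\<bar> \<le> total_variation f c y"
proof -
  have "total_variation f c x \<le> total_variation f c y - \<bar>f y - f x\<bar>"
  proof (rule total_variation_least[OF xy(1)])
    fix L assume L: "L \<in> partitions c x"
    have s: "sorted L" "L \<noteq> []" "hd L = c" "last L = x" using L by (auto simp: partitions_def)
    have "sorted (L @ [y])" using s(1) partitions_subset[OF L] xy by (auto simp: sorted_append)
    then have L': "L @ [y] \<in> partitions c y" using s by (simp add: partitions_def)
    obtain L0 l where "L = L0 @ [l]" using s(2) by (metis rev_exhaust)
    then have "variation_sum f (L @ [y]) = variation_sum f L + \<bar>f y - f x\<bar>"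
      using variation_sum_snoc[of f L0 l y] s(4) by simp
    then show "variation_sum f L \<le> total_variation f c y - \<bar>f y - f x\<bar>"
      using total_variation_upper[OF AC _ L'] xy by simp
  qed
  then show ?thesis by simp
qed

lemma total_variation_uniformly_continuous_on:
  assumes AC: "abs_cont_on f c d"
  shows "uniformly_continuous_on {c..d} (total_variation f c)"
  unfolding uniformly_continuous_on_def
proof (intro allI impI)
  fix e :: real assume e: "e > 0"
  obtain \<delta> where \<delta>: "\<delta> > 0" and small: "\<And>L. sorted L \<Longrightarrow> L \<noteq> [] \<Longrightarrow> set L \<subseteq> {c..d}
       \<Longrightarrow> last L - hd L < \<delta> \<Longrightarrow> variation_sum f L < e/2"
    using abs_cont_on_variation_sum[OF AC, of "e/2"] e by auto
  have close: "dist (total_variation f c y) (total_variation f c x) < e"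
    if xy: "c \<le> x" "x \<le> y" "y \<le> d" "y - x < \<delta>" for x y
  proof -
    have "total_variation f c y \<le> total_variation f c x + e/2"
    proof (rule total_variation_least)
      fix L assume L: "L \<in> partitions c y"
      obtain A B where AB: "A \<in> partitions c x" "B \<in> partitions x y"
          "variation_sum f L \<le> variation_sum f A + variation_sum f B"
        using partitions_split[OF L xy(1,2)] by blast
      have "variation_sum f A \<le> total_variation f c x"
        using total_variation_upper[OF AC _ AB(1)] xy by simp
      moreover have "variation_sum f B < e/2"
      proof (rule small)
        show "sorted B" "B \<noteq> []" "last B - hd B < \<delta>" using AB(2) xy by (auto simp: partitions_def)
        show "set B \<subseteq> {c..d}" using partitions_subset[OF AB(2)] xy by auto
      qed
      ultimately show "variation_sum f L \<le> total_variation f c x + e/2" using AB(3) by simp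
    qed (use xy in simp)
    moreover have "total_variation f c x \<le> total_variation f c y"
      using total_variation_step[OF AC xy(1-3)] by simp
    ultimately show ?thesis using e by (simp add: dist_real_def)
  qed
  show "\<exists>\<delta>>0. \<forall>x\<in>{c..d}. \<forall>y\<in>{c..d}. dist y x < \<delta> \<longrightarrow>
      dist (total_variation f c y) (total_variation f c x) < e"
  proof (intro exI[of _ \<delta>] conjI ballI impI)
    fix x y assume xy: "x \<in> {c..d}" "y \<in> {c..d}" "dist y x < \<delta>"
    show "dist (total_variation f c y) (total_variation f c x) < e"
    proof (cases "x \<le> y")
      case True then show ?thesis using close[of x y] xy by (simp add: dist_real_def)
    next
      case False then show ?thesis using close[of y x] xy by (simp add: dist_real_def dist_commute)
    qed
  qed (rule \<delta>)
qed

section \<open>Lebesgue's differentiation theorem for continuous monotone functions\<close>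

definition diff_quot :: "(real \<Rightarrow> real) \<Rightarrow> real \<Rightarrow> real \<Rightarrow> real" where
  "diff_quot G x y = (G y - G x) / (y - x)"

lemma diff_quot_commute: "diff_quot G x y = diff_quot G y x"
  unfolding diff_quot_def by (simp add: field_simps divide_simps)

lemma diff_quot_nonneg:
  assumes "mono G"
  shows "0 \<le> diff_quot G x y"
proof (cases x y rule: linorder_cases)
  case less then show ?thesis using monoD[OF assms, of x y] by (simp add: diff_quot_def)
next
  case greater then show ?thesis
    using monoD[OF assms, of y x] by (simp add: diff_quot_def divide_nonpos_neg)
qed (simp add: diff_quot_def)

lemma lmeasurable_outer_open:
  assumes T: "T \<in> lmeasurable" and e: "e > 0"
  obtains U where "open U" "T \<subseteq> U" "U \<in> lmeasurable" "measure lebesgue U < measure lebesgue T + e"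
proof -
  obtain U where U: "open U" "T \<subseteq> U" "U - T \<in> lmeasurable" "emeasure lebesgue (U - T) < ennreal e"
    using sets_lebesgue_outer_open[OF fmeasurableD[OF T] e] by blast
  have Um: "U \<in> lmeasurable" using fmeasurable.Un[OF T U(3)] U(2) by (simp add: Un_absorb1)
  have "measure lebesgue U \<le> measure lebesgue T + measure lebesgue (U - T)"
    using measure_Un_le[of T lebesgue "U - T"] T U(2,3) by (auto simp: Un_absorb1)
  moreover have "measure lebesgue (U - T) < e"
    using U(4) emeasure_eq_measure2[OF U(3)] e by (simp add: ennreal_less_iff)
  ultimately show ?thesis by (intro that[OF U(1,2) Um]) linarith
qed

lemma negligible_outer_open:
  assumes "negligible S" "e > 0"
  obtains U where "open U" "S \<subseteq> U" "U \<in> lmeasurable" "measure lebesgue U < e"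
proof -
  obtain T where T: "S \<subseteq> T" "T \<in> lmeasurable" "measure lebesgue T < e/2"
    using assms negligible_outer[of S] by (meson half_gt_zero)
  obtain U where U: "open U" "T \<subseteq> U" "U \<in> lmeasurable" "measure lebesgue U < measure lebesgue T + e/2"
    using lmeasurable_outer_open[OF T(2), of "e/2"] assms(2) by auto
  show ?thesis
  proof (rule that[OF U(1) _ U(3)])
    show "S \<subseteq> U" using T(1) U(2) by blast
    show "measure lebesgue U < e" using T(3) U(4) by linarith
  qed
qed

lemma outer_measure_le_of_negligible_diff:
  assumes "negligible (S - B)" "B \<in> lmeasurable"
  shows "\<exists>T. S \<subseteq> T \<and> T \<in> lmeasurable \<and> measure lebesgue T \<le> measure lebesgue B"
proof (intro exI conjI)
  have N: "S - B \<in> null_sets lebesgue" using assms(1) negligible_iff_null_sets by blast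
  show "S \<subseteq> B \<union> (S - B)" by auto
  show "B \<union> (S - B) \<in> lmeasurable" using fmeasurable.Un[OF assms(2) fmeasurableI_null_sets[OF N]] .
  show "measure lebesgue (B \<union> (S - B)) \<le> measure lebesgue B"
    using measure_Un_null_set[OF _ N, of B] assms(2) by auto
qed

lemma Vitali_covering_diff_quot:
  fixes S U :: "real set"
  assumes U: "open U" "S \<subseteq> U"
    and freq: "\<And>x. x \<in> S \<Longrightarrow> frequently (\<lambda>y. R (diff_quot G x y)) (at x)"
  obtains C where "countable C" "\<And>u v. (u,v) \<in> C \<Longrightarrow> u < v \<and> {u..v} \<subseteq> U \<and> R (diff_quot G u v)"
    "disjoint_family_on (\<lambda>p. {fst p..snd p}) C"
    "negligible (S - (\<Union>p\<in>C. {fst p..snd p}))"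
proof -
  let ?K = "{(u,v). u < v \<and> {u..v} \<subseteq> U \<and> R (diff_quot G u v)}"
  let ?a = "\<lambda>p::real\<times>real. (fst p + snd p)/2" and ?r = "\<lambda>p::real\<times>real. (snd p - fst p)/2"
  have cb: "cball (?a p) (?r p) = {fst p..snd p}" for p
    by (simp add: cball_eq_atLeastAtMost field_simps)
  have small_interval: "\<exists>u v. (u,v) \<in> ?K \<and> x \<in> {u..v} \<and> v - u < \<delta>" if x: "x \<in> S" and \<delta>: "\<delta> > 0" for x \<delta>
  proof -
    obtain \<epsilon> where \<epsilon>: "\<epsilon> > 0" "ball x \<epsilon> \<subseteq> U" using U x open_contains_ball by blast
    obtain y where y: "y \<noteq> x" "dist y x < min \<delta> \<epsilon>" "R (diff_quot G x y)"
      using freq[OF x, unfolded frequently_at] \<delta> \<epsilon> by (metis UNIV_I min_less_iff_conj)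
    show ?thesis
    proof (cases "x < y")
      case True
      have "{x..y} \<subseteq> U" using \<epsilon> y True by (auto simp: dist_real_def subset_eq)
      then show ?thesis using True y by (intro exI[of _ x] exI[of _ y]) (auto simp: dist_real_def)
    next
      case False
      then have "y < x" using y by auto
      have "{y..x} \<subseteq> U" using \<epsilon> y \<open>y < x\<close> by (auto simp: dist_real_def subset_eq)
      then show ?thesis using \<open>y < x\<close> y diff_quot_commute[of G x y]
        by (intro exI[of _ y] exI[of _ x]) (auto simp: dist_real_def)
    qed
  qed
  obtain C where C: "countable C" "C \<subseteq> ?K"
     "pairwise (\<lambda>i j. disjnt (cball (?a i) (?r i)) (cball (?a j) (?r j))) C"
     "negligible(S - (\<Union>i \<in> C. cball (?a i) (?r i)))"
  proof (rule Vitali_covering_theorem_cballs[of ?K ?r S ?a])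
    show "\<And>i. i \<in> ?K \<Longrightarrow> 0 < ?r i" by auto
    fix x and d :: real assume "x \<in> S" "0 < d"
    then obtain u v where "(u,v) \<in> ?K" "x \<in> {u..v}" "v - u < 2*d" using small_interval[of x "2*d"] by auto
    then show "\<exists>i. i \<in> ?K \<and> x \<in> cball (?a i) (?r i) \<and> ?r i < d"
      using cb[of "(u,v)"] by (intro exI[of _ "(u,v)"]) auto
  qed blast
  show ?thesis
  proof (rule that[OF C(1)])
    show "\<And>u v. (u,v) \<in> C \<Longrightarrow> u < v \<and> {u..v} \<subseteq> U \<and> R (diff_quot G u v)" using C(2) by auto
    show "disjoint_family_on (\<lambda>p. {fst p..snd p}) C"
      using C(3) unfolding disjoint_family_on_def pairwise_def disjnt_def cb by blast
    show "negligible (S - (\<Union>p\<in>C. {fst p..snd p}))" using C(4) unfolding cb .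
  qed
qed

lemma emeasure_disjoint_Icc_Union:
  fixes C :: "(real \<times> real) set"
  assumes "countable C" "disjoint_family_on (\<lambda>p. {fst p..snd p}) C"
  shows "emeasure lborel (\<Union>p\<in>C. {fst p..snd p}) = (\<integral>\<^sup>+ p. ennreal (snd p - fst p) \<partial>count_space C)"
    and "mono G \<Longrightarrow> continuous_on UNIV G \<Longrightarrow> (\<forall>p\<in>C. fst p \<le> snd p) \<Longrightarrow>
       emeasure (interval_measure G) (\<Union>p\<in>C. {fst p..snd p}) = (\<integral>\<^sup>+ p. ennreal (G (snd p) - G (fst p)) \<partial>count_space C)"
proof -
  have "emeasure lborel (\<Union>p\<in>C. {fst p..snd p}) = (\<integral>\<^sup>+ p. emeasure lborel {fst p..snd p} \<partial>count_space C)"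
    by (rule emeasure_UN_countable) (use assms in auto)
  also have "\<dots> = (\<integral>\<^sup>+ p. ennreal (snd p - fst p) \<partial>count_space C)"
    by (rule nn_integral_cong) (simp add: emeasure_lborel_Icc_eq ennreal_neg)
  finally show "emeasure lborel (\<Union>p\<in>C. {fst p..snd p}) = (\<integral>\<^sup>+ p. ennreal (snd p - fst p) \<partial>count_space C)"
    by (simp cong: nn_integral_cong)
next
  assume G: "mono G" "continuous_on UNIV G" and le: "\<forall>p\<in>C. fst p \<le> snd p"
  have "emeasure (interval_measure G) (\<Union>p\<in>C. {fst p..snd p}) = (\<integral>\<^sup>+ p. emeasure (interval_measure G) {fst p..snd p} \<partial>count_space C)"
    by (rule emeasure_UN_countable) (use assms in auto)
  also have "\<dots> = (\<integral>\<^sup>+ p. ennreal (G (snd p) - G (fst p)) \<partial>count_space C)"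
    using le G by (intro nn_integral_cong emeasure_interval_measure_Icc) (auto simp: mono_def)
  finally show "emeasure (interval_measure G) (\<Union>p\<in>C. {fst p..snd p}) = (\<integral>\<^sup>+ p. ennreal (G (snd p) - G (fst p)) \<partial>count_space C)" .
qed

lemma interval_measure_disjoint_Icc_Union_le:
  fixes G :: "real \<Rightarrow> real"
  assumes G: "mono G" "continuous_on UNIV G" and a: "a \<ge> 0"
    and C: "countable C" "disjoint_family_on (\<lambda>p. {fst p..snd p}) C"
    and le: "\<And>u v. (u,v) \<in> C \<Longrightarrow> u < v \<and> diff_quot G u v \<le> a"
  shows "emeasure (interval_measure G) (\<Union>p\<in>C. {fst p..snd p}) \<le> ennreal a * emeasure lborel (\<Union>p\<in>C. {fst p..snd p})"
proof -
  have "emeasure (interval_measure G) (\<Union>p\<in>C. {fst p..snd p}) = (\<integral>\<^sup>+ p. ennreal (G (snd p) - G (fst p)) \<partial>count_space C)"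
    using emeasure_disjoint_Icc_Union(2)[OF C G] le by (simp add: case_prod_beta' less_imp_le)
  also have "\<dots> \<le> (\<integral>\<^sup>+ p. ennreal a * ennreal (snd p - fst p) \<partial>count_space C)"
  proof (rule nn_integral_mono)
    fix p assume "p \<in> space (count_space C)"
    moreover obtain u v where [simp]: "p = (u,v)" by (cases p)
    ultimately have uv: "u < v" "(G v - G u) / (v - u) \<le> a" using le[of u v] by (auto simp: diff_quot_def)
    then have "G v - G u \<le> a * (v - u)" by (simp add: divide_le_eq)
    then show "ennreal (G (snd p) - G (fst p)) \<le> ennreal a * ennreal (snd p - fst p)"
      using uv a by (simp add: ennreal_mult[symmetric] ennreal_leI)
  qed
  also have "\<dots> = ennreal a * emeasure lborel (\<Union>p\<in>C. {fst p..snd p})"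
    using emeasure_disjoint_Icc_Union(1)[OF C] by (simp add: nn_integral_cmult)
  finally show ?thesis .
qed

lemma interval_measure_disjoint_Icc_Union_ge:
  fixes G :: "real \<Rightarrow> real"
  assumes G: "mono G" "continuous_on UNIV G" and a: "a \<ge> 0"
    and C: "countable C" "disjoint_family_on (\<lambda>p. {fst p..snd p}) C"
    and ge: "\<And>u v. (u,v) \<in> C \<Longrightarrow> u < v \<and> a \<le> diff_quot G u v"
  shows "ennreal a * emeasure lborel (\<Union>p\<in>C. {fst p..snd p}) \<le> emeasure (interval_measure G) (\<Union>p\<in>C. {fst p..snd p})"
proof -
  have "ennreal a * emeasure lborel (\<Union>p\<in>C. {fst p..snd p}) = (\<integral>\<^sup>+ p. ennreal a * ennreal (snd p - fst p) \<partial>count_space C)"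
    using emeasure_disjoint_Icc_Union(1)[OF C] by (simp add: nn_integral_cmult)
  also have "\<dots> \<le> (\<integral>\<^sup>+ p. ennreal (G (snd p) - G (fst p)) \<partial>count_space C)"
  proof (rule nn_integral_mono)
    fix p assume "p \<in> space (count_space C)"
    moreover obtain u v where [simp]: "p = (u,v)" by (cases p)
    ultimately have uv: "u < v" "a \<le> (G v - G u) / (v - u)" using ge[of u v] by (auto simp: diff_quot_def)
    then have "a * (v - u) \<le> G v - G u" by (simp add: le_divide_eq)
    then show "ennreal a * ennreal (snd p - fst p) \<le> ennreal (G (snd p) - G (fst p))"
      using uv a by (simp add: ennreal_mult[symmetric] ennreal_leI)
  qed
  also have "\<dots> = emeasure (interval_measure G) (\<Union>p\<in>C. {fst p..snd p})"
    using emeasure_disjoint_Icc_Union(2)[OF C G] ge by (simp add: case_prod_beta' less_imp_le)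
  finally show ?thesis .
qed

lemma countable_Union_Icc_in_borel: "countable C \<Longrightarrow> (\<Union>p\<in>C. {fst p..snd p::real}) \<in> sets borel"
  by (intro sets.countable_UN') auto

lemma countable_imp_negligible: "countable (A::real set) \<Longrightarrow> negligible A"
  using countable_imp_null_set_lborel negligible_iff_null_sets null_sets_completionI by blast

lemma bounded_Union_Icc_lmeasurable:
  assumes "countable C" "(\<Union>p\<in>C. {fst p..snd p}) \<subseteq> {c..d::real}"
  shows "(\<Union>p\<in>C. {fst p..snd p}) \<in> lmeasurable"
    and "emeasure lborel (\<Union>p\<in>C. {fst p..snd p}) = ennreal (measure lborel (\<Union>p\<in>C. {fst p..snd p}))"
proof -
  have borel: "(\<Union>p\<in>C. {fst p..snd p}) \<in> sets borel" by (rule countable_Union_Icc_in_borel[OF assms(1)])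
  show "(\<Union>p\<in>C. {fst p..snd p}) \<in> lmeasurable"
    using borel bounded_subset[OF bounded_cbox[of c d]] assms(2)
    by (intro bounded_set_imp_lmeasurable) auto
  have "emeasure lborel (\<Union>p\<in>C. {fst p..snd p}) \<le> emeasure lborel {c..d}"
    using assms(2) by (intro emeasure_mono) auto
  then have "emeasure lborel (\<Union>p\<in>C. {fst p..snd p}) \<noteq> top"
    by (auto simp: top_unique emeasure_lborel_Icc_eq)
  then show "emeasure lborel (\<Union>p\<in>C. {fst p..snd p}) = ennreal (measure lborel (\<Union>p\<in>C. {fst p..snd p}))"
    by (rule emeasure_eq_ennreal_measure)
qed

text \<open>Nested Vitali covers by intervals on which the difference quotient is \<open>\<le> a\<close> and \<open>\<ge> b\<close>
  shrink the measure by the factor \<open>a/b\<close>: the \<open>G\<close>-measure is squeezed between the two.\<close>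

lemma measure_nested_diff_quot_covers:
  fixes G :: "real \<Rightarrow> real"
  assumes G: "mono G" "continuous_on UNIV G" and ab: "0 < a" "a < b"
    and C1: "countable C1" "disjoint_family_on (\<lambda>p. {fst p..snd p}) C1"
      "\<And>u v. (u,v) \<in> C1 \<Longrightarrow> u < v \<and> diff_quot G u v < a"
    and C2: "countable C2" "disjoint_family_on (\<lambda>p. {fst p..snd p}) C2"
      "\<And>u v. (u,v) \<in> C2 \<Longrightarrow> u < v \<and> b < diff_quot G u v"
    and sub: "(\<Union>p\<in>C2. {fst p..snd p}) \<subseteq> (\<Union>p\<in>C1. {fst p..snd p})"
      "(\<Union>p\<in>C1. {fst p..snd p}) \<subseteq> U" "U \<in> lmeasurable" "U \<subseteq> {c..d}"
  shows "measure lborel (\<Union>p\<in>C2. {fst p..snd p}) \<le> (a/b) * measure lebesgue U"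
proof -
  define A where "A = (\<Union>p\<in>C1. {fst p..snd p})"
  define B where "B = (\<Union>p\<in>C2. {fst p..snd p})"
  have A: "A \<in> lmeasurable" "emeasure lborel A = ennreal (measure lborel A)"
    using bounded_Union_Icc_lmeasurable[OF C1(1)] sub unfolding A_def by blast+
  have B: "emeasure lborel B = ennreal (measure lborel B)"
    using bounded_Union_Icc_lmeasurable[OF C2(1)] sub unfolding B_def by blast
  have "ennreal b * emeasure lborel B \<le> emeasure (interval_measure G) B"
    unfolding B_def by (rule interval_measure_disjoint_Icc_Union_ge[OF G _ C2(1,2)]) (use ab C2(3) in force)+
  also have "\<dots> \<le> emeasure (interval_measure G) A"
    using sub(1) countable_Union_Icc_in_borel[OF C1(1)] unfolding A_def B_def by (intro emeasure_mono) auto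
  also have "\<dots> \<le> ennreal a * emeasure lborel A"
    unfolding A_def by (rule interval_measure_disjoint_Icc_Union_le[OF G _ C1(1,2)]) (use ab C1(3) in force)+
  finally have "b * measure lborel B \<le> a * measure lborel A"
    using A(2) B ab by (simp add: ennreal_mult[symmetric] ennreal_le_iff)
  also have "\<dots> \<le> a * measure lebesgue U"
    using measure_mono_fmeasurable[OF sub(2)[folded A_def] _ sub(3)] A(1) countable_Union_Icc_in_borel[OF C1(1)] ab
    unfolding A_def by (auto intro: mult_left_mono)
  finally show ?thesis using ab unfolding B_def by (simp add: field_simps)
qed

lemma negligible_diff_Union_greaterThanLessThan:
  assumes "countable C" "negligible (S - (\<Union>p\<in>C. {fst p..snd p::real}))"
  shows "negligible (S - (\<Union>p\<in>C. {fst p<..<snd p}))"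
proof (rule negligible_subset)
  show "negligible ((S - (\<Union>p\<in>C. {fst p..snd p})) \<union> (fst ` C \<union> snd ` C))"
    using assms countable_imp_negligible[of "fst ` C \<union> snd ` C"] by auto
  show "S - (\<Union>p\<in>C. {fst p<..<snd p}) \<subseteq> (S - (\<Union>p\<in>C. {fst p..snd p})) \<union> (fst ` C \<union> snd ` C)"
  proof
    fix x assume x: "x \<in> S - (\<Union>p\<in>C. {fst p<..<snd p})"
    show "x \<in> (S - (\<Union>p\<in>C. {fst p..snd p})) \<union> (fst ` C \<union> snd ` C)"
    proof (cases "x \<in> (\<Union>p\<in>C. {fst p..snd p})")
      case True
      then obtain p where "p \<in> C" "x \<in> {fst p..snd p}" by blast
      moreover have "x \<notin> {fst p<..<snd p}" using x \<open>p \<in> C\<close> by blast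
      ultimately have "x = fst p \<or> x = snd p" by auto
      then show ?thesis using \<open>p \<in> C\<close> by blast
    qed (use x in blast)
  qed
qed

lemma diff_quot_oscillation_outer_measure_shrink:
  fixes G :: "real \<Rightarrow> real"
  assumes G: "mono G" "continuous_on UNIV G" and ab: "0 < a" "a < b" and S: "S \<subseteq> {c..d}"
    and below: "\<And>x. x \<in> S \<Longrightarrow> frequently (\<lambda>y. diff_quot G x y < a) (at x)"
    and above: "\<And>x. x \<in> S \<Longrightarrow> frequently (\<lambda>y. b < diff_quot G x y) (at x)"
    and T: "S \<subseteq> T" "T \<in> lmeasurable" and e: "e > 0"
  shows "\<exists>T'. S \<subseteq> T' \<and> T' \<in> lmeasurable \<and> measure lebesgue T' \<le> (a/b) * (measure lebesgue T + e)"
proof -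
  obtain U0 where U0: "open U0" "T \<subseteq> U0" "U0 \<in> lmeasurable" "measure lebesgue U0 < measure lebesgue T + e"
    using lmeasurable_outer_open[OF T(2) e] by blast
  define U where "U = U0 \<inter> {c-1<..<d+1}"
  have U: "open U" "S \<subseteq> U" "U \<in> lmeasurable" "U \<subseteq> {c-1..d+1}"
    using U0(1,2) S T(1) unfolding U_def by (auto intro!: lmeasurable_open bounded_Int)
  have mU: "measure lebesgue U \<le> measure lebesgue T + e"
    using measure_mono_fmeasurable[of U U0 lebesgue] U0(3,4) U(3) unfolding U_def by auto
  obtain C1 where C1: "countable C1" "\<And>u v. (u,v) \<in> C1 \<Longrightarrow> u < v \<and> {u..v} \<subseteq> U \<and> diff_quot G u v < a"
      "disjoint_family_on (\<lambda>p. {fst p..snd p}) C1" "negligible (S - (\<Union>p\<in>C1. {fst p..snd p}))"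
  proof (rule Vitali_covering_diff_quot[of U S "\<lambda>q. q < a" G, OF U(1,2)])
    show "\<And>x. x \<in> S \<Longrightarrow> frequently (\<lambda>y. diff_quot G x y < a) (at x)" by (rule below)
  qed (rule that; assumption)
  define A where "A = (\<Union>p\<in>C1. {fst p..snd p})"
  define V where "V = (\<Union>p\<in>C1. {fst p<..<snd p})"
  have SV: "negligible (S - V)"
    using negligible_diff_Union_greaterThanLessThan[OF C1(1,4)] unfolding V_def .
  obtain C2 where C2: "countable C2" "\<And>u v. (u,v) \<in> C2 \<Longrightarrow> u < v \<and> {u..v} \<subseteq> V \<and> b < diff_quot G u v"
      "disjoint_family_on (\<lambda>p. {fst p..snd p}) C2" "negligible (S \<inter> V - (\<Union>p\<in>C2. {fst p..snd p}))"
  proof (rule Vitali_covering_diff_quot[of V "S \<inter> V" "\<lambda>q. b < q" G])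
    show "open V" unfolding V_def by auto
    show "S \<inter> V \<subseteq> V" by blast
    show "\<And>x. x \<in> S \<inter> V \<Longrightarrow> frequently (\<lambda>y. b < diff_quot G x y) (at x)" using above by blast
  qed (rule that; assumption)
  define B where "B = (\<Union>p\<in>C2. {fst p..snd p})"
  have BA: "B \<subseteq> A"
  proof -
    have "B \<subseteq> V" unfolding B_def using C2(2)[of "fst p" "snd p" for p] by fastforce
    moreover have "V \<subseteq> A" unfolding V_def A_def by auto
    ultimately show ?thesis by blast
  qed
  have AU: "A \<subseteq> U" unfolding A_def using C1(2)[of "fst p" "snd p" for p] by fastforce
  have negl: "negligible (S - B)"
  proof -
    have "S - B \<subseteq> (S - V) \<union> (S \<inter> V - B)" by auto
    then show ?thesis using SV C2(4) unfolding B_def by (meson negligible_Un negligible_subset)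
  qed
  have "measure lborel B \<le> (a/b) * measure lebesgue U"
    unfolding B_def
  proof (rule measure_nested_diff_quot_covers[OF G ab C1(1,3) _ C2(1,3) _ _ _ U(3,4)])
    show "\<And>u v. (u,v) \<in> C1 \<Longrightarrow> u < v \<and> diff_quot G u v < a" using C1(2) by blast
    show "\<And>u v. (u,v) \<in> C2 \<Longrightarrow> u < v \<and> b < diff_quot G u v" using C2(2) by blast
    show "(\<Union>p\<in>C2. {fst p..snd p}) \<subseteq> (\<Union>p\<in>C1. {fst p..snd p})" using BA unfolding A_def B_def .
    show "(\<Union>p\<in>C1. {fst p..snd p}) \<subseteq> U" using AU unfolding A_def .
  qed
  moreover have "B \<in> lmeasurable"
  proof -
    have "B \<subseteq> {c-1..d+1}" using BA AU U(4) by blast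
    then show ?thesis using bounded_Union_Icc_lmeasurable(1)[OF C2(1), of "c-1" "d+1"] unfolding B_def by blast
  qed
  moreover have "measure lebesgue B = measure lborel B"
    using countable_Union_Icc_in_borel[OF C2(1)] unfolding B_def by simp
  ultimately show ?thesis
    using outer_measure_le_of_negligible_diff[OF negl] mU ab
    by (smt (verit) divide_nonneg_nonneg mult_left_mono)
qed

lemma negligible_diff_quot_oscillation:
  fixes G :: "real \<Rightarrow> real"
  assumes G: "mono G" "continuous_on UNIV G" and ab: "0 < a" "a < b"
    and S: "S \<subseteq> {c..d}"
    and F1: "\<And>x. x \<in> S \<Longrightarrow> frequently (\<lambda>y. diff_quot G x y < a) (at x)"
    and F2: "\<And>x. x \<in> S \<Longrightarrow> frequently (\<lambda>y. b < diff_quot G x y) (at x)"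
  shows "negligible S"
proof -
  let ?M = "{measure lebesgue T | T. S \<subseteq> T \<and> T \<in> lmeasurable}"
  define m where "m = Inf ?M"
  have ne: "?M \<noteq> {}" using S by (auto intro!: exI[of _ "{c..d}"])
  have bdd: "bdd_below ?M" by (rule bdd_belowI[of _ 0]) auto
  have m0: "0 \<le> m" unfolding m_def by (rule cInf_greatest[OF ne]) auto
  have key: "m \<le> (a/b) * m + e" if e: "e > 0" for e
  proof -
    define e' where "e' = e * b / (2 * a)"
    have e': "e' > 0" using e ab by (simp add: e'_def)
    obtain x where x: "x \<in> ?M" "x < m + e'" using cInf_lessD[OF ne, of "m + e'"] e' unfolding m_def by auto
    then obtain T where T: "S \<subseteq> T" "T \<in> lmeasurable" "measure lebesgue T < m + e'" by auto
    obtain T' where T': "S \<subseteq> T'" "T' \<in> lmeasurable" "measure lebesgue T' \<le> (a/b) * (measure lebesgue T + e')"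
      using diff_quot_oscillation_outer_measure_shrink[OF G ab S F1 F2 T(1,2) e'] by blast
    have "m \<le> measure lebesgue T'" unfolding m_def by (rule cInf_lower[OF _ bdd]) (use T' in auto)
    also have "\<dots> \<le> (a/b) * (m + 2*e')"
      using T' T(3) ab by (smt (verit) divide_pos_pos mult_strict_left_mono)
    also have "\<dots> = (a/b) * m + e" using ab by (simp add: e'_def field_simps)
    finally show ?thesis .
  qed
  have "m \<le> (a/b) * m" by (rule field_le_epsilon) (use key in auto)
  then have "m * (1 - a/b) \<le> 0" by (simp add: algebra_simps)
  moreover have "1 - a/b > 0" using ab by simp
  ultimately have "m = 0" using m0 by (simp add: mult_le_0_iff)
  show ?thesis unfolding negligible_outer
  proof (intro allI impI)
    fix e :: real assume e: "e > 0"
    obtain x where x: "x \<in> ?M" "x < e" using cInf_lessD[OF ne, of e] e \<open>m = 0\<close> unfolding m_def by auto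
    then show "\<exists>T. S \<subseteq> T \<and> T \<in> lmeasurable \<and> measure lebesgue T < e" by auto
  qed
qed

lemma diff_quot_unbounded_outer_measure_le:
  fixes G :: "real \<Rightarrow> real"
  assumes G: "mono G" "continuous_on UNIV G" and M: "M > 0" and S: "S \<subseteq> {c..d}" and cd: "c \<le> d"
    and above: "\<And>x. x \<in> S \<Longrightarrow> frequently (\<lambda>y. M < diff_quot G x y) (at x)"
  shows "\<exists>T. S \<subseteq> T \<and> T \<in> lmeasurable \<and> measure lebesgue T \<le> (G (d+1) - G (c-1)) / M"
proof -
  have U: "open {c-1<..<d+1}" "S \<subseteq> {c-1<..<d+1}" using S by auto
  obtain C where C: "countable C" "\<And>u v. (u,v) \<in> C \<Longrightarrow> u < v \<and> {u..v} \<subseteq> {c-1<..<d+1} \<and> M < diff_quot G u v"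
      "disjoint_family_on (\<lambda>p. {fst p..snd p}) C" "negligible (S - (\<Union>p\<in>C. {fst p..snd p}))"
  proof (rule Vitali_covering_diff_quot[of _ S "\<lambda>q. M < q" G, OF U])
    show "\<And>x. x \<in> S \<Longrightarrow> frequently (\<lambda>y. M < diff_quot G x y) (at x)" by (rule above)
  qed (rule that; assumption)
  define B where "B = (\<Union>p\<in>C. {fst p..snd p})"
  have BU: "B \<subseteq> {c-1..d+1}" unfolding B_def using C(2)[of "fst p" "snd p" for p] by fastforce
  have B: "B \<in> lmeasurable" "emeasure lborel B = ennreal (measure lborel B)"
    using bounded_Union_Icc_lmeasurable[OF C(1)] BU unfolding B_def by blast+
  have "ennreal M * emeasure lborel B \<le> emeasure (interval_measure G) B"
    unfolding B_def
    by (rule interval_measure_disjoint_Icc_Union_ge[OF G _ C(1,3)]) (use M C(2) in \<open>auto simp: less_imp_le\<close>)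
  also have "\<dots> \<le> emeasure (interval_measure G) {c-1..d+1}"
    using BU by (intro emeasure_mono) auto
  also have "\<dots> = ennreal (G (d+1) - G (c-1))"
    using G cd by (intro emeasure_interval_measure_Icc) (auto simp: mono_def)
  finally have "M * measure lborel B \<le> G (d+1) - G (c-1)"
    using B(2) M monoD[OF G(1), of "c-1" "d+1"] cd by (simp add: ennreal_mult[symmetric] ennreal_le_iff)
  moreover have "measure lebesgue B = measure lborel B"
    using countable_Union_Icc_in_borel[OF C(1)] unfolding B_def by simp
  ultimately have "measure lebesgue B \<le> (G (d+1) - G (c-1)) / M"
    using M by (simp add: field_simps)
  then show ?thesis
    using outer_measure_le_of_negligible_diff[OF C(4)[folded B_def] B(1)] by (meson order.trans)
qed

lemma differentiable_if_diff_quot_not_oscillating: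
  fixes G :: "real \<Rightarrow> real"
  assumes G: "mono G" and bounded: "eventually (\<lambda>y. diff_quot G x y \<le> M) (at x)"
    and no_osc: "\<And>a b. a \<in> \<rat> \<Longrightarrow> b \<in> \<rat> \<Longrightarrow> 0 < a \<Longrightarrow> a < b \<Longrightarrow>
      \<not> (frequently (\<lambda>y. diff_quot G x y < a) (at x) \<and> frequently (\<lambda>y. b < diff_quot G x y) (at x))"
  shows "G differentiable (at x)"
proof -
  define q where "q = (\<lambda>y. ereal (diff_quot G x y))"
  have nb: "at x \<noteq> (bot :: real filter)" by simp
  have L0: "0 \<le> Liminf (at x) q"
    by (rule Liminf_bounded) (simp add: q_def diff_quot_nonneg[OF G])
  have UM: "Limsup (at x) q \<le> ereal M"
    by (rule Limsup_bounded) (use bounded in \<open>auto simp: q_def elim: eventually_mono\<close>)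
  have LU: "Liminf (at x) q \<le> Limsup (at x) q" by (rule Liminf_le_Limsup[OF nb])
  obtain l where l: "Liminf (at x) q = ereal l" using L0 LU UM by (cases "Liminf (at x) q") auto
  obtain u where u: "Limsup (at x) q = ereal u" using L0 LU UM by (cases "Limsup (at x) q") auto
  have "l = u"
  proof (rule ccontr)
    assume "l \<noteq> u"
    then have "l < u" using LU l u by simp
    then obtain a b where ab: "a \<in> \<rat>" "b \<in> \<rat>" "l < a" "a < b" "b < u"
      by (metis Rats_dense_in_real dual_order.strict_trans)
    have "frequently (\<lambda>y. diff_quot G x y < a) (at x)"
    proof (rule ccontr)
      assume "\<not> ?thesis"
      then have "eventually (\<lambda>y. ereal a \<le> q y) (at x)" by (simp add: not_frequently not_less q_def)
      then have "ereal a \<le> Liminf (at x) q" by (rule Liminf_bounded)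
      then show False using l ab by simp
    qed
    moreover have "frequently (\<lambda>y. b < diff_quot G x y) (at x)"
    proof (rule ccontr)
      assume "\<not> ?thesis"
      then have "eventually (\<lambda>y. q y \<le> ereal b) (at x)" by (simp add: not_frequently not_less q_def)
      then have "Limsup (at x) q \<le> ereal b" by (rule Limsup_bounded)
      then show False using u ab by simp
    qed
    moreover have "0 < a" using L0 l ab by simp
    ultimately show False using no_osc ab by blast
  qed
  then have "(q \<longlongrightarrow> ereal l) (at x)" using Liminf_eq_Limsup[OF nb l] u by simp
  then have "(diff_quot G x \<longlongrightarrow> l) (at x)" unfolding q_def by (simp add: lim_ereal)
  then have "(G has_field_derivative l) (at x)"
    unfolding has_field_derivative_iff diff_quot_def by simp
  then show ?thesis using real_differentiable_def by blast
qed

theorem mono_differentiable_ae: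
  fixes G :: "real \<Rightarrow> real"
  assumes G: "mono G" "continuous_on UNIV G" and cd: "c \<le> d"
  shows "negligible {x\<in>{c..d}. \<not> G differentiable (at x)}"
proof -
  define Osc where "Osc = (\<lambda>(a,b). {x\<in>{c..d}. frequently (\<lambda>y. diff_quot G x y < a) (at x)
      \<and> frequently (\<lambda>y. b < diff_quot G x y) (at x)})"
  define Rat_pairs where "Rat_pairs = {(a,b). a \<in> \<rat> \<and> b \<in> \<rat> \<and> 0 < a \<and> a < (b::real)}"
  define Unb where "Unb = {x\<in>{c..d}. \<forall>n::nat. frequently (\<lambda>y. real (Suc n) < diff_quot G x y) (at x)}"
  have "countable Rat_pairs"
    by (rule countable_subset[of _ "\<rat> \<times> \<rat>"]) (auto simp: Rat_pairs_def intro: countable_SIGMA countable_rat)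
  then have N1: "negligible (\<Union>(Osc ` Rat_pairs))"
    by (intro negligible_countable_Union) (auto simp: Rat_pairs_def Osc_def intro!: negligible_diff_quot_oscillation[OF G])
  have N2: "negligible Unb"
    unfolding negligible_outer_le
  proof (intro allI impI)
    fix e :: real assume e: "e > 0"
    obtain n :: nat where n: "(G (d+1) - G (c-1)) / e \<le> real n" using real_arch_simple by blast
    have "(G (d+1) - G (c-1)) / real (Suc n) \<le> e"
      using n e by (simp add: field_simps)
    moreover have "\<exists>T. Unb \<subseteq> T \<and> T \<in> lmeasurable \<and> measure lebesgue T \<le> (G (d+1) - G (c-1)) / real (Suc n)"
      by (rule diff_quot_unbounded_outer_measure_le[OF G _ _ cd]) (auto simp: Unb_def)
    ultimately show "\<exists>T. Unb \<subseteq> T \<and> T \<in> lmeasurable \<and> measure lebesgue T \<le> e"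
      by (meson order.trans)
  qed
  have "{x\<in>{c..d}. \<not> G differentiable (at x)} \<subseteq> \<Union>(Osc ` Rat_pairs) \<union> Unb"
  proof (rule subsetI, rule ccontr)
    fix x assume x: "x \<in> {x\<in>{c..d}. \<not> G differentiable (at x)}" and nx: "x \<notin> \<Union>(Osc ` Rat_pairs) \<union> Unb"
    then obtain n :: nat where "\<not> frequently (\<lambda>y. real (Suc n) < diff_quot G x y) (at x)"
      unfolding Unb_def by auto
    then have "eventually (\<lambda>y. diff_quot G x y \<le> real (Suc n)) (at x)"
      by (simp add: not_frequently not_less)
    moreover have "\<not> (frequently (\<lambda>y. diff_quot G x y < a) (at x) \<and> frequently (\<lambda>y. b < diff_quot G x y) (at x))"
      if "a \<in> \<rat>" "b \<in> \<rat>" "0 < a" "a < b" for a b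
      using nx x that unfolding Osc_def Rat_pairs_def by blast
    ultimately show False using differentiable_if_diff_quot_not_oscillating[OF G(1)] x by blast
  qed
  then show ?thesis by (rule negligible_subset[rotated]) (use N1 N2 in auto)
qed

text \<open>Jordan decomposition: on \<open>[c, d]\<close>, \<open>f\<close> is the difference of its total variation and
  of the total variation minus \<open>f\<close>, both continuous and monotone once extended constantly.\<close>

theorem abs_cont_on_differentiable_ae:
  assumes AC: "abs_cont_on f c d" and cd: "c \<le> d"
  shows "negligible {x\<in>{c..d}. \<not> f differentiable (at x)}"
proof -
  define V where "V = (\<lambda>x. total_variation f c (max c (min d x)))"
  define K where "K = (\<lambda>x. V x - f (max c (min d x)))"
  have step: "V x + \<bar>f (max c (min d y)) - f (max c (min d x))\<bar> \<le> V y" if "x \<le> y" for x y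
    unfolding V_def using that cd by (intro total_variation_step[OF AC]) auto
  have mono: "mono V" "mono K"
    unfolding mono_def K_def using step by (smt (verit))+
  have cont_f: "continuous_on {c..d} f"
    using abs_cont_on_imp_uniformly_continuous_on[OF AC] uniformly_continuous_imp_continuous by blast
  have cont_V: "continuous_on {c..d} (total_variation f c)"
    using total_variation_uniformly_continuous_on[OF AC] uniformly_continuous_imp_continuous by blast
  have clamp: "continuous_on UNIV (\<lambda>x. max c (min d x))" "(\<lambda>x. max c (min d x)) ` UNIV \<subseteq> {c..d}"
    using cd by (auto intro!: continuous_intros)
  have cont_V': "continuous_on UNIV V"
    unfolding V_def by (rule continuous_on_compose2[OF cont_V clamp])
  have cont: "continuous_on UNIV V" "continuous_on UNIV K"
    unfolding K_def by (intro cont_V' continuous_on_diff continuous_on_compose2[OF cont_f clamp])+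
  have "{x\<in>{c..d}. \<not> f differentiable (at x)} \<subseteq>
      {c, d} \<union> {x\<in>{c..d}. \<not> V differentiable (at x)} \<union> {x\<in>{c..d}. \<not> K differentiable (at x)}"
  proof (rule subsetI, rule ccontr)
    fix x assume x: "x \<in> {x\<in>{c..d}. \<not> f differentiable (at x)}"
      and "x \<notin> {c, d} \<union> {x\<in>{c..d}. \<not> V differentiable (at x)} \<union> {x\<in>{c..d}. \<not> K differentiable (at x)}"
    then have xi: "x \<in> {c<..<d}" and "(\<lambda>t. V t - K t) differentiable (at x)"
      by (auto intro: differentiable_diff)
    then obtain D where D: "((\<lambda>t. V t - K t) has_derivative D) (at x)" unfolding differentiable_def by blast
    have "(f has_derivative D) (at x)"
      by (rule has_derivative_transform_within_open[OF D _ xi]) (auto simp: K_def V_def)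
    then show False using x unfolding differentiable_def by blast
  qed
  moreover have "negligible ({c, d} \<union> {x\<in>{c..d}. \<not> V differentiable (at x)} \<union> {x\<in>{c..d}. \<not> K differentiable (at x)})"
    using mono_differentiable_ae[OF mono(1) cont(1) cd] mono_differentiable_ae[OF mono(2) cont(2) cd]
    by (simp add: negligible_Un_eq)
  ultimately show ?thesis by (rule negligible_subset[rotated])
qed

section \<open>The fundamental theorem of calculus for absolutely continuous functions\<close>

lemma nonoverlapping_intervals_ordered:
  fixes S :: "(real \<times> real) set"
  assumes fin: "finite S" and inside: "\<forall>p\<in>S. c \<le> fst p \<and> fst p < snd p \<and> snd p \<le> d"
    and disj: "\<forall>p\<in>S. \<forall>q\<in>S. p \<noteq> q \<longrightarrow> snd p \<le> fst q \<or> snd q \<le> fst p"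
  obtains n a b where "ordered_intervals c d n a b"
    "\<And>\<phi> :: real \<times> real \<Rightarrow> real. (\<Sum>k<n. \<phi> (a k, b k)) = (\<Sum>p\<in>S. \<phi> p)"
proof -
  have inj: "inj_on fst S"
  proof (rule inj_onI)
    fix p q assume pq: "p \<in> S" "q \<in> S" "fst p = fst q"
    show "p = q"
    proof (rule ccontr)
      assume "p \<noteq> q"
      then have "snd p \<le> fst q \<or> snd q \<le> fst p" using disj pq by blast
      then show False using inside pq by force
    qed
  qed
  define L where "L = sorted_list_of_set (fst ` S)"
  define P where "P = the_inv_into S fst"
  have L: "set L = fst ` S" "distinct L" "sorted L" unfolding L_def using fin by auto
  have PS: "P u \<in> S" "fst (P u) = u" if "u \<in> fst ` S" for u
    unfolding P_def using the_inv_into_into[OF inj that] f_the_inv_into_f[OF inj that] by auto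
  have Lk: "L ! k \<in> fst ` S" if "k < length L" for k using that L(1) nth_mem by blast
  have pair: "(L ! k, snd (P (L ! k))) = P (L ! k)" if "k < length L" for k
    using PS(2)[OF Lk[OF that]] by (simp add: prod_eq_iff)
  show ?thesis
  proof (rule that[of "length L" "\<lambda>k. L ! k" "\<lambda>k. snd (P (L ! k))"])
    fix \<phi> :: "real \<times> real \<Rightarrow> real"
    have "(\<Sum>k<length L. \<phi> (L ! k, snd (P (L ! k)))) = (\<Sum>k<length L. \<phi> (P (L ! k)))"
      using pair by (intro sum.cong) auto
    also have "\<dots> = sum_list (map (\<lambda>u. \<phi> (P u)) L)"
      by (simp add: sum_list_sum_nth atLeast0LessThan)
    also have "\<dots> = (\<Sum>u\<in>fst ` S. \<phi> (P u))"
      using L by (simp add: sum_list_distinct_conv_sum_set)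
    also have "\<dots> = (\<Sum>p\<in>S. \<phi> p)"
      unfolding P_def by (simp add: sum.reindex[OF inj] the_inv_into_f_f[OF inj])
    finally show "(\<Sum>k<length L. \<phi> (L ! k, snd (P (L ! k)))) = (\<Sum>p\<in>S. \<phi> p)" .
  next
    show "ordered_intervals c d (length L) (\<lambda>k. L ! k) (\<lambda>k. snd (P (L ! k)))"
      unfolding ordered_intervals_def
    proof (rule conjI; intro allI impI)
      fix k assume "k < length L"
      then have "P (L ! k) \<in> S" "fst (P (L ! k)) = L ! k" using PS[OF Lk] by auto
      moreover from this(1) have "c \<le> fst (P (L ! k)) \<and> fst (P (L ! k)) < snd (P (L ! k)) \<and> snd (P (L ! k)) \<le> d"
        using inside by blast
      ultimately show "c \<le> L ! k \<and> L ! k \<le> snd (P (L ! k)) \<and> snd (P (L ! k)) \<le> d" by simp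
    next
      fix k assume k: "Suc k < length L"
      let ?p = "P (L ! k)" and ?q = "P (L ! Suc k)"
      have lt: "L ! k < L ! Suc k" using L(2,3) k by (simp add: sorted_iff_nth_mono nth_eq_iff_index_eq less_le)
      have p: "?p \<in> S" "fst ?p = L ! k" and q: "?q \<in> S" "fst ?q = L ! Suc k"
        using PS[OF Lk] k by auto
      then have "?p \<noteq> ?q" using lt by auto
      then have "snd ?p \<le> fst ?q \<or> snd ?q \<le> fst ?p" using disj p(1) q(1) by blast
      moreover have "fst ?q < snd ?q" using inside q(1) by blast
      ultimately show "snd ?p \<le> L ! Suc k" using p(2) q(2) lt by linarith
    qed
  qed
qed

lemma abs_cont_on_nonoverlapping_intervals:
  assumes AC: "abs_cont_on f c d" and e: "e > 0"
  obtains \<delta> where "\<delta> > 0" "\<And>S. finite S \<Longrightarrow> (\<forall>p\<in>S. c \<le> fst p \<and> fst p < snd p \<and> snd p \<le> d)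
      \<Longrightarrow> (\<forall>p\<in>S. \<forall>q\<in>S. p \<noteq> q \<longrightarrow> snd p \<le> fst q \<or> snd q \<le> fst p)
      \<Longrightarrow> (\<Sum>p\<in>S. snd p - fst p) < \<delta> \<Longrightarrow> (\<Sum>p\<in>S. \<bar>f (snd p) - f (fst p)\<bar>) < e"
proof -
  obtain \<delta> where \<delta>: "\<delta> > 0" and small: "\<And>n a b. ordered_intervals c d n a b \<Longrightarrow>
     (\<Sum>k<n. b k - a k) < \<delta> \<Longrightarrow> (\<Sum>k<n. \<bar>f (b k) - f (a k)\<bar>) < e"
    using abs_cont_onD[OF AC e] by blast
  show ?thesis
  proof (rule that[OF \<delta>])
    fix S :: "(real \<times> real) set"
    assume S: "finite S" "\<forall>p\<in>S. c \<le> fst p \<and> fst p < snd p \<and> snd p \<le> d"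
      "\<forall>p\<in>S. \<forall>q\<in>S. p \<noteq> q \<longrightarrow> snd p \<le> fst q \<or> snd q \<le> fst p"
      and len: "(\<Sum>p\<in>S. snd p - fst p) < \<delta>"
    show "(\<Sum>p\<in>S. \<bar>f (snd p) - f (fst p)\<bar>) < e"
    proof (rule nonoverlapping_intervals_ordered[OF S])
      fix n a b assume ord: "ordered_intervals c d n a b"
        and sums: "\<And>\<phi> :: real \<times> real \<Rightarrow> real. (\<Sum>k<n. \<phi> (a k, b k)) = (\<Sum>p\<in>S. \<phi> p)"
      have "(\<Sum>k<n. b k - a k) < \<delta>" using len sums[of "\<lambda>p. snd p - fst p"] by simp
      then have "(\<Sum>k<n. \<bar>f (b k) - f (a k)\<bar>) < e" by (rule small[OF ord])
      then show ?thesis using sums[of "\<lambda>p. \<bar>f (snd p) - f (fst p)\<bar>"] by simp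
    qed
  qed
qed

lemma tagged_division_of_real_interval:
  assumes D: "D tagged_division_of {a..b}" and xK: "(x,K) \<in> D"
  shows "\<exists>v w. K = {v..w} \<and> v \<le> w \<and> a \<le> v \<and> w \<le> b \<and> x \<in> {v..w} \<and> Inf K = v \<and> Sup K = w
     \<and> measure lborel K = w - v"
proof -
  obtain v w where K: "K = cbox v w" using tagged_division_ofD(4)[OF D xK] by blast
  have x: "x \<in> K" using tagged_division_ofD(2)[OF D xK] .
  have sub: "K \<subseteq> {a..b}" using tagged_division_ofD(3)[OF D xK] .
  have vw: "v \<le> w" using x K by auto
  show ?thesis using K vw x sub by (intro exI[of _ v] exI[of _ w]) auto
qed

lemma tagged_division_content_sum_le_measure:
  assumes D: "D tagged_division_of {a..b}" and Q: "Q \<subseteq> D"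
    and sub: "\<And>x K. (x,K) \<in> Q \<Longrightarrow> K \<subseteq> G" and G: "G \<in> lmeasurable"
  shows "(\<Sum>(x,K)\<in>Q. measure lborel K) \<le> measure lebesgue G"
proof -
  have finQ: "finite Q" using tagged_division_ofD(1)[OF D] Q finite_subset by blast
  have "(\<Sum>(x,K)\<in>Q. measure lborel K) = (\<Sum>p\<in>Q. measure lborel (snd p))" by (simp add: split_def)
  also have "\<dots> = (\<Sum>K\<in>snd ` Q. measure lborel K)"
  proof (rule sym, rule sum.reindex_nontrivial[OF finQ, unfolded comp_def])
    fix p q assume pq: "p \<in> Q" "q \<in> Q" "p \<noteq> q" "snd p = snd q"
    obtain x K where p: "p = (x,K)" by (cases p)
    obtain y K' where q: "q = (y,K')" by (cases q)
    have "interior K \<inter> interior K' = {}"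
      using tagged_division_ofD(5)[OF D, of x K y K'] pq p q Q by auto
    then have "interior K = {}" using pq p q by simp
    moreover obtain u v where "K = cbox u v" using tagged_division_ofD(4)[OF D, of x K] pq p Q by auto
    ultimately show "measure lborel (snd p) = 0" using p by (metis content_eq_0_interior snd_conv)
  qed
  also have "\<dots> = measure lebesgue (\<Union>(snd ` Q))"
  proof -
    have d1: "snd ` D division_of {a..b}" by (rule division_of_tagged_division[OF D])
    then have "snd ` D division_of \<Union>(snd ` D)" by (metis division_ofD(6))
    then have d2: "snd ` Q division_of \<Union>(snd ` Q)" by (rule division_of_subset) (use Q in auto)
    have "(\<Sum>K\<in>snd ` Q. measure lebesgue K) = measure lebesgue (\<Union>(snd ` Q))"
      by (rule content_division[OF d2])
    moreover have "(\<Sum>K\<in>snd ` Q. measure lebesgue K) = (\<Sum>K\<in>snd ` Q. measure lborel K)"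
    proof (rule sum.cong)
      fix K assume "K \<in> snd ` Q"
      then obtain u v where "K = cbox u v" using division_ofD(4)[OF d2] by blast
      then show "measure lebesgue K = measure lborel K" by simp
    qed simp
    ultimately show ?thesis by simp
  qed
  also have "\<dots> \<le> measure lebesgue G"
  proof (rule measure_mono_fmeasurable[OF _ _ G])
    show "\<Union>(snd ` Q) \<subseteq> G" using sub by force
    have d1: "snd ` D division_of {a..b}" by (rule division_of_tagged_division[OF D])
    then have "snd ` D division_of \<Union>(snd ` D)" by (metis division_ofD(6))
    then have d2: "snd ` Q division_of \<Union>(snd ` Q)" by (rule division_of_subset) (use Q in auto)
    show "\<Union>(snd ` Q) \<in> sets lebesgue" using lmeasurable_division[OF d2] by auto
  qed
  finally show ?thesis .
qed

lemma sum_geometric_half_le: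
  fixes T :: "nat set" and \<theta> :: real assumes "finite T" "\<theta> \<ge> 0"
  shows "(\<Sum>n\<in>T. \<theta> * (1/2)^Suc n) \<le> \<theta>"
proof -
  have "(\<Sum>n\<in>T. (1/2::real)^Suc n) \<le> (\<Sum>n. (1/2::real)^Suc n)"
    by (rule sum_le_suminf) (use power_half_series assms in \<open>auto simp: sums_iff\<close>)
  also have "\<dots> = 1" using power_half_series by (simp add: sums_iff)
  finally have s1: "(\<Sum>n\<in>T. (1/2::real)^Suc n) \<le> 1" .
  have "(\<Sum>n\<in>T. \<theta> * (1/2)^Suc n) = \<theta> * (\<Sum>n\<in>T. (1/2)^Suc n)" by (simp add: sum_distrib_left)
  also have "\<dots> \<le> \<theta>" using s1 assms(2) by (simp add: mult_left_le)
  finally show ?thesis .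
qed

lemma sum_grouped_by_level_le:
  fixes Q :: "'a set" and c :: "'a \<Rightarrow> real" and N :: "'a \<Rightarrow> nat"
  assumes fin: "finite Q" and th: "\<theta> \<ge> 0"
    and m: "\<And>n. (\<Sum>p\<in>{p\<in>Q. N p = n}. c p) \<le> \<theta> * (1/2)^Suc n / (real n + 1)"
  shows "(\<Sum>p\<in>Q. c p * (real (N p) + 1)) \<le> \<theta>"
proof -
  have fT: "finite (N ` Q)" using fin by simp
  have "(\<Sum>p\<in>Q. c p * (real (N p) + 1)) = (\<Sum>n\<in>N ` Q. \<Sum>p\<in>{p\<in>Q. N p = n}. c p * (real (N p) + 1))"
    by (rule sum.group[OF fin fT, symmetric]) auto
  also have "\<dots> = (\<Sum>n\<in>N ` Q. (real n + 1) * (\<Sum>p\<in>{p\<in>Q. N p = n}. c p))"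
    by (rule sum.cong) (auto simp: sum_distrib_left mult.commute intro: sum.cong)
  also have "\<dots> \<le> (\<Sum>n\<in>N ` Q. \<theta> * (1/2)^Suc n)"
  proof (rule sum_mono)
    fix n assume "n \<in> N ` Q"
    have "(real n + 1) * (\<Sum>p\<in>{p\<in>Q. N p = n}. c p) \<le> (real n + 1) * (\<theta> * (1/2)^Suc n / (real n + 1))"
      by (rule mult_left_mono[OF m]) simp
    moreover have "(real n + 1) * (\<theta> * (1/2)^Suc n / (real n + 1)) = \<theta> * (1/2)^Suc n"
      by (metis nonzero_mult_div_cancel_left times_divide_eq_right of_nat_Suc of_nat_neq_0 add.commute)
    ultimately show "(real n + 1) * (\<Sum>p\<in>{p\<in>Q. N p = n}. c p) \<le> \<theta> * (1/2)^Suc n" by (rule ord_le_eq_trans)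
  qed
  also have "\<dots> \<le> \<theta>" by (rule sum_geometric_half_le[OF fT th])
  finally show ?thesis .
qed

lemma has_real_derivative_linear_approx:
  assumes der: "(u has_real_derivative h) (at x within S)" and e: "e > 0"
  shows "\<exists>d>0. \<forall>y\<in>S. \<bar>y - x\<bar> < d \<longrightarrow> \<bar>u y - u x - h * (y - x)\<bar> \<le> e * \<bar>y - x\<bar>"
proof -
  have "((\<lambda>y. (u y - u x) / (y - x)) \<longlongrightarrow> h) (at x within S)"
    using der by (simp add: has_field_derivative_iff)
  then have "eventually (\<lambda>y. dist ((u y - u x) / (y - x)) h < e) (at x within S)"
    using tendstoD e by blast
  then obtain d where d: "d > 0" "\<forall>y\<in>S. y \<noteq> x \<and> dist y x < d \<longrightarrow> dist ((u y - u x) / (y - x)) h < e"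
    unfolding eventually_at by blast
  have "\<bar>u y - u x - h * (y - x)\<bar> \<le> e * \<bar>y - x\<bar>" if y: "y \<in> S" "\<bar>y - x\<bar> < d" for y
  proof (cases "y = x")
    case False
    then have "\<bar>(u y - u x) / (y - x) - h\<bar> < e" using d y by (auto simp: dist_real_def)
    moreover have "u y - u x - h * (y - x) = ((u y - u x) / (y - x) - h) * (y - x)"
      using False by (simp add: field_simps)
    ultimately show ?thesis by (simp add: abs_mult mult_right_mono)
  qed simp
  then show ?thesis using d(1) by blast
qed


lemma tagged_division_endpoints_nonoverlapping:
  assumes D: "D tagged_division_of {a..b}" and Q: "Q \<subseteq> D"
  defines "Q' \<equiv> {p\<in>Q. measure lborel (snd p) \<noteq> 0}" and "ends \<equiv> \<lambda>p. (Inf (snd p), Sup (snd p))"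
  shows "inj_on ends Q'"
    and "\<forall>q\<in>ends ` Q'. a \<le> fst q \<and> fst q < snd q \<and> snd q \<le> b"
    and "\<forall>q\<in>ends ` Q'. \<forall>q'\<in>ends ` Q'. q \<noteq> q' \<longrightarrow> snd q \<le> fst q' \<or> snd q' \<le> fst q"
    and "\<And>p. p \<in> Q' \<Longrightarrow> measure lborel (snd p) = Sup (snd p) - Inf (snd p)"
proof -
  have ev: "\<exists>v w. snd p = {v..w} \<and> v < w \<and> a \<le> v \<and> w \<le> b \<and> Inf (snd p) = v \<and> Sup (snd p) = w
      \<and> measure lborel (snd p) = w - v" if p: "p \<in> Q'" for p
  proof -
    obtain x K where pxK: "p = (x,K)" by (cases p)
    obtain v w where vw: "K = {v..w}" "v \<le> w" "a \<le> v" "w \<le> b" "Inf K = v" "Sup K = w"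
        "measure lborel K = w - v" using tagged_division_of_real_interval[OF D, of x K] p pxK Q unfolding Q'_def by blast
    have "v \<noteq> w" using p pxK vw unfolding Q'_def by auto
    then show ?thesis using vw pxK by (intro exI[of _ v] exI[of _ w]) auto
  qed
  have disj: "w \<le> v' \<or> w' \<le> v"
    if "p \<in> Q'" "p' \<in> Q'" "p \<noteq> p'" "snd p = {v..w}" "v < w" "snd p' = {v'..w'}" "v' < w'" for p p' v w v' w'
  proof -
    have "p \<in> D" "p' \<in> D" using that(1,2) Q unfolding Q'_def by auto
    then have "interior (snd p) \<inter> interior (snd p') = {}"
      using tagged_division_ofD(5)[OF D, of "fst p" "snd p" "fst p'" "snd p'"] \<open>p \<noteq> p'\<close> by simp
    then have "{v<..<w} \<inter> {v'<..<w'} = {}" using that by simp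
    then show ?thesis
    proof (rule contrapos_pp)
      assume "\<not> (w \<le> v' \<or> w' \<le> v)"
      then have "(max v v' + min w w') / 2 \<in> {v<..<w} \<inter> {v'<..<w'}" using that(5,7) by auto
      then show "{v<..<w} \<inter> {v'<..<w'} \<noteq> {}" by blast
    qed
  qed
  show "inj_on ends Q'"
  proof (rule inj_onI)
    fix p q assume pq: "p \<in> Q'" "q \<in> Q'" "ends p = ends q"
    obtain v w where p: "snd p = {v..w}" "v < w" "Inf (snd p) = v" "Sup (snd p) = w" using ev[OF pq(1)] by blast
    obtain v' w' where q: "snd q = {v'..w'}" "v' < w'" "Inf (snd q) = v'" "Sup (snd q) = w'" using ev[OF pq(2)] by blast
    show "p = q" using disj[OF pq(1,2) _ p(1,2) q(1,2)] pq(3) p q unfolding ends_def by force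
  qed
  show "\<forall>q\<in>ends ` Q'. a \<le> fst q \<and> fst q < snd q \<and> snd q \<le> b"
    using ev unfolding ends_def by fastforce
  show "\<forall>q\<in>ends ` Q'. \<forall>q'\<in>ends ` Q'. q \<noteq> q' \<longrightarrow> snd q \<le> fst q' \<or> snd q' \<le> fst q"
  proof (intro ballI impI)
    fix q q' assume qq: "q \<in> ends ` Q'" "q' \<in> ends ` Q'" "q \<noteq> q'"
    then obtain p p' where pp: "p \<in> Q'" "p' \<in> Q'" "q = ends p" "q' = ends p'" by auto
    obtain v w where p: "snd p = {v..w}" "v < w" "Inf (snd p) = v" "Sup (snd p) = w" using ev[OF pp(1)] by blast
    obtain v' w' where p': "snd p' = {v'..w'}" "v' < w'" "Inf (snd p') = v'" "Sup (snd p') = w'" using ev[OF pp(2)] by blast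
    have "p \<noteq> p'" using qq pp by auto
    then show "snd q \<le> fst q' \<or> snd q' \<le> fst q"
      using disj[OF pp(1,2) _ p(1,2) p'(1,2)] pp p p' unfolding ends_def by auto
  qed
  show "\<And>p. p \<in> Q' \<Longrightarrow> measure lborel (snd p) = Sup (snd p) - Inf (snd p)" using ev by force
qed

lemma abs_cont_on_tagged_division:
  assumes AC: "abs_cont_on u a b" and e: "e > 0"
  obtains \<delta> where "\<delta> > 0" "\<And>D Q. D tagged_division_of {a..b} \<Longrightarrow> Q \<subseteq> D \<Longrightarrow>
    (\<Sum>(x,K)\<in>Q. measure lborel K) < \<delta> \<Longrightarrow> (\<Sum>(x,K)\<in>Q. \<bar>u (Sup K) - u (Inf K)\<bar>) < e"
proof -
  obtain \<delta> where \<delta>: "\<delta> > 0" and small: "\<And>S. finite S \<Longrightarrow> (\<forall>p\<in>S. a \<le> fst p \<and> fst p < snd p \<and> snd p \<le> b)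
      \<Longrightarrow> (\<forall>p\<in>S. \<forall>q\<in>S. p \<noteq> q \<longrightarrow> snd p \<le> fst q \<or> snd q \<le> fst p)
      \<Longrightarrow> (\<Sum>p\<in>S. snd p - fst p) < \<delta> \<Longrightarrow> (\<Sum>p\<in>S. \<bar>u (snd p) - u (fst p)\<bar>) < e"
    using abs_cont_on_nonoverlapping_intervals[OF AC e] by blast
  show ?thesis
  proof (rule that[OF \<delta>])
    fix D Q assume D: "D tagged_division_of {a..b}" and Q: "Q \<subseteq> D" and len: "(\<Sum>(x,K)\<in>Q. measure lborel K) < \<delta>"
    define Q' where "Q' = {p\<in>Q. measure lborel (snd p) \<noteq> 0}"
    define ends where "ends = (\<lambda>p :: real \<times> real set. (Inf (snd p), Sup (snd p)))"
    note E = tagged_division_endpoints_nonoverlapping[OF D Q, folded Q'_def ends_def]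
    have finQ: "finite Q" using tagged_division_ofD(1)[OF D] Q finite_subset by blast
    have degenerate: "u (Sup K) - u (Inf K) = 0" if "(x,K) \<in> Q - Q'" for x K
    proof -
      have "(x,K) \<in> D" using that Q by auto
      then obtain v w where "K = {v..w}" "v \<le> w" "Inf K = v" "Sup K = w" "measure lborel K = w - v"
        using tagged_division_of_real_interval[OF D, of x K] by blast
      then show ?thesis using that unfolding Q'_def by auto
    qed
    have "(\<Sum>(x,K)\<in>Q. \<bar>u (Sup K) - u (Inf K)\<bar>) = (\<Sum>p\<in>Q. \<bar>u (Sup (snd p)) - u (Inf (snd p))\<bar>)"
      by (simp add: split_def)
    also have "\<dots> = (\<Sum>p\<in>Q'. \<bar>u (Sup (snd p)) - u (Inf (snd p))\<bar>)"
      by (rule sum.mono_neutral_right[OF finQ]) (use degenerate in \<open>auto simp: Q'_def\<close>)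
    also have "\<dots> = (\<Sum>q\<in>ends ` Q'. \<bar>u (snd q) - u (fst q)\<bar>)"
      using sum.reindex[OF E(1), of "\<lambda>q. \<bar>u (snd q) - u (fst q)\<bar>"] by (simp add: ends_def comp_def)
    also have "\<dots> < e"
    proof (rule small[OF _ E(2,3)])
      show "finite (ends ` Q')" using finQ unfolding Q'_def by simp
      have "(\<Sum>q\<in>ends ` Q'. snd q - fst q) = (\<Sum>p\<in>Q'. measure lborel (snd p))"
        using sum.reindex[OF E(1), of "\<lambda>q. snd q - fst q"] E(4) by (simp add: ends_def comp_def)
      also have "\<dots> = (\<Sum>p\<in>Q. measure lborel (snd p))"
        by (rule sum.mono_neutral_left[OF finQ]) (auto simp: Q'_def)
      also have "\<dots> = (\<Sum>(x,K)\<in>Q. measure lborel K)"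
        by (simp add: split_def)
      finally show "(\<Sum>q\<in>ends ` Q'. snd q - fst q) < \<delta>" using len by simp
    qed
    finally show "(\<Sum>(x,K)\<in>Q. \<bar>u (Sup K) - u (Inf K)\<bar>) < e" .
  qed
qed

text \<open>Around a negligible set one can choose balls so small that tags in it contribute
  arbitrarily little to a Riemann sum, whatever the (possibly unbounded) integrand: the points
  where \<open>\<bar>h\<bar> \<approx> n\<close> are covered by an open set of measure \<open>\<theta> 2\<^sup>-\<^sup>n\<^sup>-\<^sup>1 / (n + 1)\<close>.\<close>

lemma negligible_tags_gauge:
  assumes E: "negligible E" and \<theta>: "\<theta> > 0"
  obtains r where "\<And>x. x \<in> E \<Longrightarrow> r x > 0"
    "\<And>D Q. D tagged_division_of {a..b} \<Longrightarrow> Q \<subseteq> D \<Longrightarrow> (\<And>x K. (x,K) \<in> Q \<Longrightarrow> x \<in> E \<and> K \<subseteq> ball x (r x))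
       \<Longrightarrow> (\<Sum>(x,K)\<in>Q. measure lborel K * \<bar>h x\<bar>) \<le> \<theta>"
proof -
  define level where "level x = nat \<lfloor>\<bar>h x\<bar>\<rfloor>" for x
  have h_level: "\<bar>h x\<bar> \<le> real (level x) + 1" for x
    unfolding level_def by linarith
  have "\<forall>n. \<exists>G. open G \<and> {x\<in>E. level x = n} \<subseteq> G \<and> G \<in> lmeasurable \<and>
      measure lebesgue G < \<theta> * (1/2)^Suc n / (real n + 1)"
  proof
    fix n
    have "negligible {x\<in>E. level x = n}" by (rule negligible_subset[OF E]) auto
    moreover have "\<theta> * (1/2)^Suc n / (real n + 1) > 0" using \<theta> by simp
    ultimately show "\<exists>G. open G \<and> {x\<in>E. level x = n} \<subseteq> G \<and> G \<in> lmeasurable \<and>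
        measure lebesgue G < \<theta> * (1/2)^Suc n / (real n + 1)"
      by (meson negligible_outer_open)
  qed
  then obtain G where "\<forall>n. open (G n) \<and> {x\<in>E. level x = n} \<subseteq> G n \<and> G n \<in> lmeasurable \<and>
      measure lebesgue (G n) < \<theta> * (1/2)^Suc n / (real n + 1)"
    by (rule choice[THEN exE])
  then have G: "\<And>n. open (G n)" "\<And>n. {x\<in>E. level x = n} \<subseteq> G n" "\<And>n. G n \<in> lmeasurable"
      "\<And>n. measure lebesgue (G n) < \<theta> * (1/2)^Suc n / (real n + 1)"
    by blast+
  have "\<exists>r>0. ball x r \<subseteq> G (level x)" if "x \<in> E" for x
    using G(1,2) that open_contains_ball by blast
  then obtain r where "\<forall>x\<in>E. r x > 0 \<and> ball x (r x) \<subseteq> G (level x)"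
    by (metis bchoice)
  then have r: "\<And>x. x \<in> E \<Longrightarrow> r x > 0" "\<And>x. x \<in> E \<Longrightarrow> ball x (r x) \<subseteq> G (level x)"
    by blast+
  show ?thesis
  proof (rule that[OF r(1)])
    fix D Q assume D: "D tagged_division_of {a..b}" and Q: "Q \<subseteq> D"
      and fine: "\<And>x K. (x,K) \<in> Q \<Longrightarrow> x \<in> E \<and> K \<subseteq> ball x (r x)"
    have finQ: "finite Q" using tagged_division_ofD(1)[OF D] Q finite_subset by blast
    have level_sum: "(\<Sum>p\<in>{p\<in>Q. level (fst p) = n}. measure lborel (snd p)) \<le> \<theta> * (1/2)^Suc n / (real n + 1)" for n
    proof -
      have "(\<Sum>p\<in>{p\<in>Q. level (fst p) = n}. measure lborel (snd p))
          = (\<Sum>(x,K)\<in>{p\<in>Q. level (fst p) = n}. measure lborel K)" by (simp add: split_def)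
      also have "\<dots> \<le> measure lebesgue (G n)"
        by (rule tagged_division_content_sum_le_measure[OF D _ _ G(3)]) (use Q fine r(2) in fastforce)+
      finally show ?thesis using G(4)[of n] by simp
    qed
    have "(\<Sum>(x,K)\<in>Q. measure lborel K * \<bar>h x\<bar>) \<le> (\<Sum>p\<in>Q. measure lborel (snd p) * (real (level (fst p)) + 1))"
      by (simp add: split_def) (intro sum_mono mult_left_mono h_level; simp)
    also have "\<dots> \<le> \<theta>" by (rule sum_grouped_by_level_le[OF finQ _ level_sum]) (use \<theta> in auto)
    finally show "(\<Sum>(x,K)\<in>Q. measure lborel K * \<bar>h x\<bar>) \<le> \<theta>" .
  qed
qed

lemma tagged_division_derivative_sum_le:
  assumes ab: "a \<le> b" and D: "D tagged_division_of {a..b}" and Q: "Q \<subseteq> D" and \<eta>: "\<eta> \<ge> 0"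
    and approx: "\<And>x K y. (x,K) \<in> Q \<Longrightarrow> y \<in> K \<Longrightarrow> \<bar>u y - u x - h x * (y - x)\<bar> \<le> \<eta> * \<bar>y - x\<bar>"
  shows "\<bar>\<Sum>(x,K)\<in>Q. measure lborel K * h x - (u (Sup K) - u (Inf K))\<bar> \<le> \<eta> * (b - a)"
proof -
  have finD: "finite D" using tagged_division_ofD(1)[OF D] .
  have one_tag: "\<bar>measure lborel K * h x - (u (Sup K) - u (Inf K))\<bar> \<le> \<eta> * measure lborel K" if xK: "(x,K) \<in> Q" for x K
  proof -
    obtain v w where vw: "K = {v..w}" "x \<in> {v..w}" "Inf K = v" "Sup K = w" "measure lborel K = w - v"
      using tagged_division_of_real_interval[OF D, of x K] xK Q by blast
    have "\<bar>u v - u x - h x * (v - x)\<bar> \<le> \<eta> * \<bar>v - x\<bar>" "\<bar>u w - u x - h x * (w - x)\<bar> \<le> \<eta> * \<bar>w - x\<bar>"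
      using approx[OF xK, of v] approx[OF xK, of w] vw by auto
    moreover have "\<eta> * \<bar>v - x\<bar> + \<eta> * \<bar>w - x\<bar> = \<eta> * (w - v)" using vw by (simp add: algebra_simps)
    ultimately show ?thesis using vw by (simp add: algebra_simps)
  qed
  have "\<bar>\<Sum>(x,K)\<in>Q. measure lborel K * h x - (u (Sup K) - u (Inf K))\<bar>
      \<le> (\<Sum>(x,K)\<in>Q. \<bar>measure lborel K * h x - (u (Sup K) - u (Inf K))\<bar>)"
    by (rule sum_abs[THEN order_trans]) (simp add: split_def)
  also have "\<dots> \<le> (\<Sum>(x,K)\<in>Q. \<eta> * measure lborel K)"
    using one_tag by (intro sum_mono) auto
  also have "\<dots> \<le> (\<Sum>(x,K)\<in>D. \<eta> * measure lborel K)"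
    using Q \<eta> by (intro sum_mono2[OF finD]) auto
  also have "\<dots> = \<eta> * (b - a)"
  proof -
    have "(\<Sum>(x,K)\<in>D. measure lborel K) = measure lborel (cbox a b)"
      by (rule additive_content_tagged_division) (use D in simp)
    then show ?thesis using ab by (simp add: sum_distrib_left[symmetric] split_def)
  qed
  finally show ?thesis .
qed

lemma abs_cont_on_negligible_tags_gauge:
  assumes AC: "abs_cont_on u a b" and E: "negligible E" and e: "e > 0"
  obtains r where "\<And>x. x \<in> E \<Longrightarrow> r x > 0"
    "\<And>D Q. D tagged_division_of {a..b} \<Longrightarrow> Q \<subseteq> D \<Longrightarrow> (\<And>x K. (x,K) \<in> Q \<Longrightarrow> x \<in> E \<and> K \<subseteq> ball x (r x))
       \<Longrightarrow> \<bar>\<Sum>(x,K)\<in>Q. measure lborel K * h x - (u (Sup K) - u (Inf K))\<bar> < e"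
proof -
  obtain \<delta> where \<delta>: "\<delta> > 0" and AC_small: "\<And>D Q. D tagged_division_of {a..b} \<Longrightarrow> Q \<subseteq> D \<Longrightarrow>
      (\<Sum>(x,K)\<in>Q. measure lborel K) < \<delta> \<Longrightarrow> (\<Sum>(x,K)\<in>Q. \<bar>u (Sup K) - u (Inf K)\<bar>) < e/2"
    using abs_cont_on_tagged_division[OF AC, of "e/2"] e by auto
  define \<theta> where "\<theta> = min \<delta> (e/2) / 2"
  have \<theta>: "\<theta> > 0" "\<theta> < \<delta>" "\<theta> < e/2" using \<delta> e by (auto simp: \<theta>_def)
  obtain r where r: "\<And>x. x \<in> E \<Longrightarrow> r x > 0" and E_small: "\<And>D Q. D tagged_division_of {a..b} \<Longrightarrow> Q \<subseteq> D \<Longrightarrow>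
      (\<And>x K. (x,K) \<in> Q \<Longrightarrow> x \<in> E \<and> K \<subseteq> ball x (r x)) \<Longrightarrow>
      (\<Sum>(x,K)\<in>Q. measure lborel K * \<bar>\<bar>h x\<bar> + 1\<bar>) \<le> \<theta>"
    using negligible_tags_gauge[OF E \<theta>(1), of a b "\<lambda>x. \<bar>h x\<bar> + 1"] by blast
  show ?thesis
  proof (rule that[OF r])
    fix D Q assume D: "D tagged_division_of {a..b}" and Q: "Q \<subseteq> D"
      and tags: "\<And>x K. (x,K) \<in> Q \<Longrightarrow> x \<in> E \<and> K \<subseteq> ball x (r x)"
    have weights: "(\<Sum>(x,K)\<in>Q. measure lborel K * \<bar>\<bar>h x\<bar> + 1\<bar>) \<le> \<theta>" by (rule E_small[OF D Q tags])
    have "\<bar>\<Sum>(x,K)\<in>Q. measure lborel K * h x\<bar> \<le> \<theta>"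
      by (rule sum_abs[THEN order_trans], rule order_trans[OF _ weights])
        (auto intro!: sum_mono mult_left_mono simp: abs_mult split_def)
    moreover have "(\<Sum>(x,K)\<in>Q. measure lborel K) \<le> (\<Sum>(x,K)\<in>Q. measure lborel K * \<bar>\<bar>h x\<bar> + 1\<bar>)"
      by (auto intro!: sum_mono simp: split_def distrib_left)
    then have "(\<Sum>(x,K)\<in>Q. \<bar>u (Sup K) - u (Inf K)\<bar>) < e/2"
      using weights \<theta> by (intro AC_small[OF D Q]) auto
    moreover have "\<bar>\<Sum>(x,K)\<in>Q. u (Sup K) - u (Inf K)\<bar> \<le> (\<Sum>(x,K)\<in>Q. \<bar>u (Sup K) - u (Inf K)\<bar>)"
      by (rule sum_abs[THEN order_trans]) (simp add: split_def)
    ultimately show "\<bar>\<Sum>(x,K)\<in>Q. measure lborel K * h x - (u (Sup K) - u (Inf K))\<bar> < e"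
      using \<theta>(3) by (simp add: sum_subtractf split_def)
  qed
qed

theorem abs_cont_on_has_integral_derivative:
  assumes AC: "abs_cont_on u a b" and ab: "a \<le> b" and E: "negligible E"
    and der: "\<And>x. x \<in> {a..b} - E \<Longrightarrow> (u has_real_derivative h x) (at x within {a..b})"
  shows "(h has_integral (u b - u a)) {a..b}"
  unfolding has_integral_real
proof (intro allI impI)
  fix e :: real assume e: "e > 0"
  define \<eta> where "\<eta> = e / (2 * (b - a + 1))"
  have \<eta>: "\<eta> > 0" "\<eta> * (b - a) < e/2"
    using e ab by (auto simp: \<eta>_def field_simps)
  obtain r where r: "\<And>x. x \<in> E \<Longrightarrow> r x > 0" and bad: "\<And>D Q. D tagged_division_of {a..b} \<Longrightarrow> Q \<subseteq> D \<Longrightarrow>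
      (\<And>x K. (x,K) \<in> Q \<Longrightarrow> x \<in> E \<and> K \<subseteq> ball x (r x)) \<Longrightarrow>
      \<bar>\<Sum>(x,K)\<in>Q. measure lborel K * h x - (u (Sup K) - u (Inf K))\<bar> < e/2"
    using abs_cont_on_negligible_tags_gauge[OF AC E half_gt_zero[OF e], of h] by blast
  have "\<forall>x\<in>{a..b} - E. \<exists>d>0. \<forall>y\<in>{a..b}. \<bar>y - x\<bar> < d \<longrightarrow> \<bar>u y - u x - h x * (y - x)\<bar> \<le> \<eta> * \<bar>y - x\<bar>"
    using has_real_derivative_linear_approx[OF der \<eta>(1)] by blast
  then obtain d where d: "\<And>x. x \<in> {a..b} - E \<Longrightarrow> d x > 0"
      "\<And>x y. x \<in> {a..b} - E \<Longrightarrow> y \<in> {a..b} \<Longrightarrow> \<bar>y - x\<bar> < d x \<Longrightarrow> \<bar>u y - u x - h x * (y - x)\<bar> \<le> \<eta> * \<bar>y - x\<bar>"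
    by metis
  define rad where "rad x = (if x \<in> E then r x else if x \<in> {a..b} then d x else 1)" for x
  show "\<exists>\<gamma>. gauge \<gamma> \<and> (\<forall>\<D>. \<D> tagged_division_of {a..b} \<and> \<gamma> fine \<D> \<longrightarrow>
            norm ((\<Sum>(x, k)\<in>\<D>. measure lborel k *\<^sub>R h x) - (u b - u a)) < e)"
  proof (intro exI conjI allI impI)
    show "gauge (\<lambda>x. ball x (rad x))" using r d(1) by (intro gauge_ball_dependent) (auto simp: rad_def)
    fix D assume "D tagged_division_of {a..b} \<and> (\<lambda>x. ball x (rad x)) fine D"
    then have D: "D tagged_division_of {a..b}" and fine: "\<And>x K. (x,K) \<in> D \<Longrightarrow> K \<subseteq> ball x (rad x)"
      by (auto simp: fine_def)
    define Dgood where "Dgood = {p\<in>D. fst p \<notin> E}"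
    define Dbad where "Dbad = {p\<in>D. fst p \<in> E}"
    define \<Delta> where "\<Delta> Q = (\<Sum>(x,K)\<in>Q. measure lborel K * h x - (u (Sup K) - u (Inf K)))" for Q
    have split: "(\<Sum>(x, K)\<in>D. measure lborel K *\<^sub>R h x) - (u b - u a) = \<Delta> Dgood + \<Delta> Dbad"
    proof -
      have "D = Dgood \<union> Dbad" "Dgood \<inter> Dbad = {}" "finite D"
        using tagged_division_ofD(1)[OF D] unfolding Dgood_def Dbad_def by auto
      moreover have "u b - u a = (\<Sum>(x,K)\<in>D. u (Sup K) - u (Inf K))"
        using additive_tagged_division_1[OF ab D, of u] by simp
      ultimately show ?thesis
        unfolding \<Delta>_def by (simp add: split_def sum_subtractf sum.union_disjoint)
    qed
    have "\<bar>\<Delta> Dgood\<bar> \<le> \<eta> * (b - a)"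
      unfolding \<Delta>_def
    proof (rule tagged_division_derivative_sum_le[OF ab D _ less_imp_le[OF \<eta>(1)]])
      fix x K y assume xK: "(x,K) \<in> Dgood" and y: "y \<in> K"
      have "x \<in> {a..b} - E" "K \<subseteq> {a..b}"
        using xK tagged_division_ofD(2,3)[OF D, of x K] unfolding Dgood_def by auto
      moreover have "\<bar>y - x\<bar> < d x"
        using fine[of x K] xK y \<open>x \<in> {a..b} - E\<close> unfolding Dgood_def rad_def by (auto simp: dist_real_def)
      ultimately show "\<bar>u y - u x - h x * (y - x)\<bar> \<le> \<eta> * \<bar>y - x\<bar>" using d(2) y by blast
    qed (auto simp: Dgood_def)
    moreover have "\<bar>\<Delta> Dbad\<bar> < e/2"
      unfolding \<Delta>_def
    proof (rule bad[OF D])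
      show "x \<in> E \<and> K \<subseteq> ball x (r x)" if "(x,K) \<in> Dbad" for x K
        using fine[of x K] that unfolding Dbad_def rad_def by auto
    qed (auto simp: Dbad_def)
    ultimately show "norm ((\<Sum>(x, K)\<in>D. measure lborel K *\<^sub>R h x) - (u b - u a)) < e"
      using split \<eta>(2) by simp
  qed
qed

lemma atLeastAtMost_subset_ivl: "c \<in> ivl T x0 \<Longrightarrow> d \<in> ivl T x0 \<Longrightarrow> {c..d} \<subseteq> ivl T x0"
  unfolding ivl_def by (auto intro: le_less_trans[of _ "ereal d"])

lemma at_within_ivl_neq_bot:
  assumes x: "x \<in> ivl T x0"
  shows "at x within ivl T x0 \<noteq> bot"
proof -
  obtain z where z: "ereal x < z" "z < x0" using x dense by (auto simp: ivl_def)
  then obtain y where "z = ereal y" using x by (cases z) auto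
  with z x have y: "x < y" "y \<in> ivl T x0" by (auto simp: ivl_def)
  have "at x within {x..y} \<le> at x within ivl T x0" by (rule at_le[OF atLeastAtMost_subset_ivl[OF x y(2)]])
  moreover have "at x within {x..y} = at_right x" using y(1) by (rule at_within_Icc_at_right)
  ultimately show ?thesis by (metis bot.extremum_uniqueI trivial_limit_at_right_real)
qed

lemma to_x0_neq_bot: "ereal T < x0 \<Longrightarrow> to_x0 x0 \<noteq> bot"
  by (cases x0) (auto simp: to_x0_def)

lemma eventually_to_x0_ivl_ge:
  assumes T: "ereal T < x0" and c: "c \<in> ivl T x0"
  shows "eventually (\<lambda>x. x \<in> ivl T x0 \<and> c \<le> x) (to_x0 x0)"
proof (cases x0)
  case (real r)
  then have "c < r" using c by (simp add: ivl_def)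
  then have "eventually (\<lambda>x. x \<in> {c<..<r}) (at_left r)" by (rule eventually_at_left_real)
  then show ?thesis using real c by (auto simp: to_x0_def ivl_def elim!: eventually_mono)
next
  case PInf
  have "eventually (\<lambda>x. c \<le> x) at_top" by (rule eventually_ge_at_top)
  then have "eventually (\<lambda>x. x \<in> ivl T x0 \<and> c \<le> x) at_top"
    by (rule eventually_mono) (use c PInf in \<open>auto simp: ivl_def\<close>)
  then show ?thesis using PInf by (simp add: to_x0_def)
qed (use T in simp)

lemma eventually_to_x0_imp_threshold:
  assumes T: "ereal T < x0" and ev: "eventually P (to_x0 x0)"
  obtains c where "c \<in> ivl T x0" "\<And>x. x \<in> ivl T x0 \<Longrightarrow> c \<le> x \<Longrightarrow> P x"
proof (cases x0)
  case (real r)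
  then have "T < r" "eventually P (at_left r)" using T ev by (simp_all add: to_x0_def)
  then obtain b where b: "b < r" "\<And>y. b < y \<Longrightarrow> y < r \<Longrightarrow> P y"
    using eventually_at_left[of T r P] by blast
  show ?thesis
  proof (rule that[of "max T ((b + r)/2)"])
    show "max T ((b + r)/2) \<in> ivl T x0" using b \<open>T < r\<close> real by (auto simp: ivl_def)
    show "P x" if "x \<in> ivl T x0" "max T ((b + r)/2) \<le> x" for x
      using that b real by (intro b(2)) (auto simp: ivl_def)
  qed
next
  case PInf
  then obtain N where "\<And>n. N \<le> n \<Longrightarrow> P n" using ev by (auto simp: to_x0_def eventually_at_top_linorder)
  then show ?thesis using that[of "max N T"] PInf by (auto simp: ivl_def)
qed (use T in simp)

lemma has_real_derivative_dI:
  "h differentiable (at x within S) \<Longrightarrow> (h has_real_derivative dI S h x) (at x within S)"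
  unfolding dI_def by (simp add: vector_derivative_works has_real_derivative_iff_has_vector_derivative)

lemma dI_eqI:
  "at x within S \<noteq> bot \<Longrightarrow> (h has_real_derivative y) (at x within S) \<Longrightarrow> dI S h x = y"
  unfolding dI_def using vector_derivative_within
  by (simp add: has_real_derivative_iff_has_vector_derivative)

section \<open>Asymptotics by integration\<close>

lemma tendsto_iff_smallo_factor:
  fixes g q h :: "'a \<Rightarrow> real"
  assumes eq: "eventually (\<lambda>x. g x = q x * h x) F" and nz: "eventually (\<lambda>x. q x \<noteq> 0) F"
  shows "(h \<longlongrightarrow> a) F \<longleftrightarrow> (\<lambda>x. g x - a * q x) \<in> o[F](q)"
proof -
  have "eventually (\<lambda>x. (g x - a * q x) / q x = h x - a) F"
    using eq nz by eventually_elim (simp add: field_simps)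
  then have "((\<lambda>x. (g x - a * q x) / q x) \<longlongrightarrow> 0) F \<longleftrightarrow> (h \<longlongrightarrow> a) F"
    by (simp add: tendsto_cong LIM_zero_iff)
  then show ?thesis using nz by (metis smalloD_tendsto smalloI_tendsto)
qed

lemma has_integral_dominated_abs_le:
  fixes H q :: "real \<Rightarrow> real"
  assumes "(H has_integral A) {c..x}" "(q has_integral B) {c..x}" "\<And>t. t \<in> {c..x} \<Longrightarrow> \<bar>H t\<bar> \<le> q t"
  shows "\<bar>A\<bar> \<le> B"
proof -
  have "A \<le> B" by (rule has_integral_le[OF assms(1,2)]) (use assms(3) in force)
  moreover have "- A \<le> B" by (rule has_integral_le[OF has_integral_neg[OF assms(1)] assms(2)]) (use assms(3) in force)
  ultimately show ?thesis by linarith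
qed

lemma has_integral_abs_le_of_ae_bound:
  fixes H q :: "real \<Rightarrow> real"
  assumes H: "(H has_integral A) {c..x}" and q: "(q has_integral B) {c..x}"
    and negl: "negligible ({c..x} - D)"
    and sign: "(\<forall>t\<in>{c..x}. 0 < q t) \<or> (\<forall>t\<in>{c..x}. q t < 0)"
    and bound: "\<And>t. t \<in> {c..x} \<Longrightarrow> t \<in> D \<Longrightarrow> \<bar>H t\<bar> \<le> e * \<bar>q t\<bar>" and e: "0 \<le> e"
  shows "\<bar>A\<bar> \<le> e * \<bar>B\<bar>"
proof -
  obtain \<sigma> :: real where \<sigma>: "\<bar>\<sigma>\<bar> = 1" "\<And>t. t \<in> {c..x} \<Longrightarrow> \<bar>q t\<bar> = \<sigma> * q t"
    using sign
  proof (elim disjE)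
    assume "\<forall>t\<in>{c..x}. 0 < q t"
    then show ?thesis using that[of 1] by force
  next
    assume "\<forall>t\<in>{c..x}. q t < 0"
    then show ?thesis using that[of "-1"] by force
  qed
  have "((\<lambda>t. if t \<in> D then H t else 0) has_integral A) {c..x}"
    by (rule has_integral_spike[OF negl _ H]) auto
  moreover have "((\<lambda>t. e * \<sigma> * q t) has_integral (e * \<sigma> * B)) {c..x}"
    using has_integral_mult_right[OF q] by simp
  moreover have "\<bar>if t \<in> D then H t else 0\<bar> \<le> e * \<sigma> * q t" if "t \<in> {c..x}" for t
    using bound[OF that] \<sigma>(2)[OF that] e by (auto simp: mult.assoc)
  ultimately have "\<bar>A\<bar> \<le> e * \<sigma> * B" by (rule has_integral_dominated_abs_le)
  also have "\<dots> \<le> e * \<bar>B\<bar>"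
    using abs_ge_self[of "\<sigma> * B"] \<sigma>(1) e by (simp add: abs_mult mult.assoc mult_left_mono)
  finally show ?thesis .
qed

text \<open>The relation between the derivatives is only needed on a set
  \<open>D\<close> of full measure, since \<open>U\<close> and \<open>r\<close> are recovered from them by integration.\<close>

lemma smallo_of_integral_smallo:
  fixes H U q r :: "real \<Rightarrow> real" and T :: real and x0 :: ereal
  defines "I \<equiv> ivl T x0" and "F \<equiv> to_x0 x0"
  assumes T: "ereal T < x0"
    and U: "\<And>c x. c \<in> I \<Longrightarrow> x \<in> I \<Longrightarrow> c \<le> x \<Longrightarrow> (H has_integral (U x - U c)) {c..x}"
    and r: "\<And>c x. c \<in> I \<Longrightarrow> x \<in> I \<Longrightarrow> c \<le> x \<Longrightarrow> (q has_integral (r x - r c)) {c..x}"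
    and sign: "(\<forall>x\<in>I. 0 < q x) \<or> (\<forall>x\<in>I. q x < 0)"
    and r_big: "filterlim (\<lambda>x. \<bar>r x\<bar>) at_top F"
    and D: "\<And>c x. c \<in> I \<Longrightarrow> x \<in> I \<Longrightarrow> negligible ({c..x} - D)"
    and small: "H \<in> o[inf F (principal D)](q)"
  shows "U \<in> o[F](r)"
proof (rule landau_o.smallI)
  fix \<epsilon> :: real assume \<epsilon>: "\<epsilon> > 0"
  define e where "e = \<epsilon>/2"
  have e: "e > 0" using \<epsilon> by (simp add: e_def)
  have "eventually (\<lambda>x. norm (H x) \<le> e * norm (q x)) (inf F (principal D))"
    by (rule landau_o.smallD[OF small e])
  then have "eventually (\<lambda>x. x \<in> D \<longrightarrow> \<bar>H x\<bar> \<le> e * \<bar>q x\<bar>) (to_x0 x0)"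
    unfolding F_def eventually_inf_principal by simp
  then obtain c where c: "c \<in> I" "\<And>x. x \<in> I \<Longrightarrow> c \<le> x \<Longrightarrow> x \<in> D \<Longrightarrow> \<bar>H x\<bar> \<le> e * \<bar>q x\<bar>"
    unfolding I_def by (rule eventually_to_x0_imp_threshold[OF T]) blast
  have growth: "\<bar>U x - U c\<bar> \<le> e * (\<bar>r x\<bar> + \<bar>r c\<bar>)" if x: "x \<in> I" "c \<le> x" for x
  proof -
    have sub: "{c..x} \<subseteq> I" unfolding I_def by (rule atLeastAtMost_subset_ivl[OF c(1)[unfolded I_def] x(1)[unfolded I_def]])
    have "\<bar>U x - U c\<bar> \<le> e * \<bar>r x - r c\<bar>"
      by (rule has_integral_abs_le_of_ae_bound[OF U[OF c(1) x] r[OF c(1) x] D[OF c(1) x(1)]])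
        (use sign sub c(2) e in \<open>auto simp: subset_iff\<close>)
    then show ?thesis using e by (smt (verit) mult_left_mono abs_triangle_ineq4)
  qed
  have "eventually (\<lambda>x. x \<in> I \<and> c \<le> x) F"
    using eventually_to_x0_ivl_ge[OF T c(1)[unfolded I_def]] unfolding F_def I_def .
  moreover have "eventually (\<lambda>x. (\<bar>U c\<bar> + e * \<bar>r c\<bar>) / e \<le> \<bar>r x\<bar>) F"
    using r_big unfolding filterlim_at_top by simp
  ultimately show "eventually (\<lambda>x. norm (U x) \<le> \<epsilon> * norm (r x)) F"
  proof eventually_elim
    case (elim x)
    then have "\<bar>U c\<bar> + e * \<bar>r c\<bar> \<le> e * \<bar>r x\<bar>" using e by (simp add: field_simps)
    moreover have "\<bar>U x - U c\<bar> \<le> e * \<bar>r x\<bar> + e * \<bar>r c\<bar>" using growth[of x] elim by (simp add: distrib_left)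
    moreover have "\<bar>U x\<bar> \<le> \<bar>U x - U c\<bar> + \<bar>U c\<bar>" by linarith
    moreover have "\<epsilon> * \<bar>r x\<bar> = 2 * (e * \<bar>r x\<bar>)" by (simp add: e_def)
    ultimately show ?case by (simp only: real_norm_def)
  qed
qed

lemma eventually_to_x0_above: "ereal c < x0 \<Longrightarrow> eventually (\<lambda>y. c \<le> y \<and> ereal y < x0) (to_x0 x0)"
  using eventually_to_x0_ivl_ge[of c x0 c] by (auto simp: ivl_def elim: eventually_mono)

lemma imp_conv_iff_tendsto:
  assumes c: "ereal c < x0"
    and U: "\<And>y. c \<le> y \<Longrightarrow> ereal y < x0 \<Longrightarrow> (H has_integral (U y - U c)) {c..y}"
  shows "imp_conv x0 c H \<longleftrightarrow> (\<exists>L. (U \<longlongrightarrow> L) (to_x0 x0))"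
proof -
  have "eventually (\<lambda>y. integral {c..y} H = U y - U c) (to_x0 x0)"
    using eventually_to_x0_above[OF c] by (rule eventually_mono) (use U in \<open>auto intro: integral_unique\<close>)
  then have "((\<lambda>y. integral {c..y} H) \<longlongrightarrow> L) (to_x0 x0) \<longleftrightarrow> ((\<lambda>y. U y - U c) \<longlongrightarrow> L) (to_x0 x0)" for L
    by (rule tendsto_cong)
  also have "((\<lambda>y. U y - U c) \<longlongrightarrow> L) (to_x0 x0) \<longleftrightarrow> (U \<longlongrightarrow> L + U c) (to_x0 x0)" for L
    using tendsto_add_const_iff[of "- U c" U "L + U c" "to_x0 x0"] by simp
  finally have lim: "((\<lambda>y. integral {c..y} H) \<longlongrightarrow> L) (to_x0 x0) \<longleftrightarrow> (U \<longlongrightarrow> L + U c) (to_x0 x0)" for L .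
  have "\<forall>y. c \<le> y \<and> ereal y < x0 \<longrightarrow> H integrable_on {c..y}" using U by blast
  moreover have "(\<exists>L. ((\<lambda>y. integral {c..y} H) \<longlongrightarrow> L) (to_x0 x0)) \<longleftrightarrow> (\<exists>L. (U \<longlongrightarrow> L) (to_x0 x0))"
  proof
    assume "\<exists>L. (U \<longlongrightarrow> L) (to_x0 x0)"
    then obtain L where "(U \<longlongrightarrow> L) (to_x0 x0)" by blast
    then show "\<exists>L. ((\<lambda>y. integral {c..y} H) \<longlongrightarrow> L) (to_x0 x0)" using lim[of "L - U c"] by auto
  qed (use lim in blast)
  ultimately show ?thesis unfolding imp_conv_def by blast
qed

lemma imp_int_eq_lim:
  assumes c: "ereal c < x0"
    and U: "\<And>y. c \<le> y \<Longrightarrow> ereal y < x0 \<Longrightarrow> (H has_integral (U y - U c)) {c..y}"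
    and L: "(U \<longlongrightarrow> L) (to_x0 x0)"
  shows "imp_int x0 c H = L - U c"
proof -
  have "eventually (\<lambda>y. U y - U c = integral {c..y} H) (to_x0 x0)"
    using eventually_to_x0_above[OF c] by (rule eventually_mono) (use U in \<open>auto intro: integral_unique[symmetric]\<close>)
  moreover have "((\<lambda>y. U y - U c) \<longlongrightarrow> L - U c) (to_x0 x0)" by (intro tendsto_intros L)
  ultimately have "((\<lambda>y. integral {c..y} H) \<longlongrightarrow> L - U c) (to_x0 x0)" by (rule tendsto_cong[THEN iffD1])
  then show ?thesis
    unfolding imp_int_def using to_x0_neq_bot[OF c] by (rule tendsto_Lim[rotated])
qed


lemma connected_ivl: "connected (ivl T x0)"
  unfolding is_interval_connected_1[symmetric] is_interval_1
  using atLeastAtMost_subset_ivl by (meson atLeastAtMost_iff subsetD)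

lemma continuous_on_nonzero_sign:
  fixes w :: "real \<Rightarrow> real"
  assumes conn: "connected S" and cont: "continuous_on S w" and nz: "\<forall>x\<in>S. w x \<noteq> 0"
  shows "(\<forall>x\<in>S. 0 < w x) \<or> (\<forall>x\<in>S. w x < 0)"
proof (rule ccontr)
  assume "\<not> ?thesis"
  then obtain a b where ab: "a \<in> S" "b \<in> S" "w a \<le> 0" "0 \<le> w b" by (meson not_le)
  have "0 \<in> w ` S"
    using connectedD_interval[OF connected_continuous_image[OF cont conn], of "w a" "w b" 0] ab by auto
  then show False using nz by auto
qed

section \<open>The standing assumptions\<close>

locale asymptotic_scale =
  fixes T :: real and x0 :: ereal and phi1 phi2 :: "real \<Rightarrow> real"
  assumes T_x0: "ereal T < x0"
    and phi1_diff: "\<forall>x\<in>ivl T x0. phi1 differentiable (at x within ivl T x0)"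
    and phi2_diff: "\<forall>x\<in>ivl T x0. phi2 differentiable (at x within ivl T x0)"
    and phi1_C1: "continuous_on (ivl T x0) (dI (ivl T x0) phi1)"
    and phi2_C1: "continuous_on (ivl T x0) (dI (ivl T x0) phi2)"
    and phi2_small: "phi2 \<in> o[to_x0 x0](phi1)"
    and phi1_nz: "\<forall>x\<in>ivl T x0. phi1 x \<noteq> 0"
    and phi2_nz: "\<forall>x\<in>ivl T x0. phi2 x \<noteq> 0"
    and W_nz: "\<forall>x\<in>ivl T x0. Wr (ivl T x0) phi1 phi2 x \<noteq> 0"
begin

abbreviation "I \<equiv> ivl T x0"
abbreviation "F \<equiv> to_x0 x0"
abbreviation "W \<equiv> Wr I phi1 phi2"
abbreviation "r \<equiv> \<lambda>t. phi1 t / phi2 t"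
abbreviation "q \<equiv> dI I r"

lemma phi_has_derivative:
  assumes "x \<in> I"
  shows "(phi1 has_real_derivative dI I phi1 x) (at x within I)"
    and "(phi2 has_real_derivative dI I phi2 x) (at x within I)"
  using assms phi1_diff phi2_diff by (auto intro: has_real_derivative_dI)

lemma phi_continuous: "continuous_on I phi1" "continuous_on I phi2"
  using phi_has_derivative by (auto simp: continuous_on_eq_continuous_within intro: DERIV_continuous)

lemma r_has_derivative:
  assumes x: "x \<in> I"
  shows "(r has_real_derivative q x) (at x within I)" and "q x = - W x / (phi2 x)\<^sup>2"
proof -
  have "(r has_real_derivative (dI I phi1 x * phi2 x - phi1 x * dI I phi2 x) / (phi2 x * phi2 x)) (at x within I)"
    using phi_has_derivative[OF x] phi2_nz x by (intro DERIV_divide) auto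
  moreover have "(dI I phi1 x * phi2 x - phi1 x * dI I phi2 x) / (phi2 x * phi2 x) = - W x / (phi2 x)\<^sup>2"
    by (simp add: Wr_def power2_eq_square algebra_simps)
  ultimately have der: "(r has_real_derivative - W x / (phi2 x)\<^sup>2) (at x within I)" by simp
  then show "q x = - W x / (phi2 x)\<^sup>2" by (rule dI_eqI[OF at_within_ivl_neq_bot[OF x]])
  with der show "(r has_real_derivative q x) (at x within I)" by simp
qed

lemma q_nonzero: "x \<in> I \<Longrightarrow> q x \<noteq> 0"
  using r_has_derivative(2) W_nz phi2_nz by simp

lemma q_sign: "(\<forall>x\<in>I. 0 < q x) \<or> (\<forall>x\<in>I. q x < 0)"
proof -
  have "continuous_on I W"
    unfolding Wr_def by (intro continuous_intros phi1_C1 phi2_C1 phi_continuous)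
  then have "(\<forall>x\<in>I. 0 < W x) \<or> (\<forall>x\<in>I. W x < 0)"
    using continuous_on_nonzero_sign[OF connected_ivl] W_nz by blast
  moreover have "0 < (phi2 x)\<^sup>2" if "x \<in> I" for x using phi2_nz that by simp
  ultimately show ?thesis
    using r_has_derivative(2) by (auto simp: divide_pos_pos divide_neg_pos)
qed

lemma q_has_integral:
  assumes "c \<in> I" "d \<in> I" "c \<le> d"
  shows "(q has_integral (r d - r c)) {c..d}"
proof (rule fundamental_theorem_of_calculus[OF assms(3)])
  fix x assume "x \<in> {c..d}"
  then have "x \<in> I" using atLeastAtMost_subset_ivl[OF assms(1,2)] by blast
  then show "(r has_vector_derivative q x) (at x within {c..d})"
    using DERIV_subset[OF r_has_derivative(1) atLeastAtMost_subset_ivl[OF assms(1,2)]]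
    by (simp add: has_real_derivative_iff_has_vector_derivative)
qed

lemma eventually_in_I: "eventually (\<lambda>x. x \<in> I) F"
  using eventually_to_x0_above[OF T_x0] by (simp add: ivl_def)

lemma abs_r_at_top: "filterlim (\<lambda>x. \<bar>r x\<bar>) at_top F"
proof -
  have ev: "eventually (\<lambda>x. 0 < \<bar>phi2 x / phi1 x\<bar> \<and> inverse \<bar>phi2 x / phi1 x\<bar> = \<bar>r x\<bar>) F"
    using eventually_in_I by eventually_elim (use phi1_nz phi2_nz in auto)
  have "filterlim (\<lambda>x. inverse \<bar>phi2 x / phi1 x\<bar>) at_top F"
    using tendsto_rabs_zero[OF smalloD_tendsto[OF phi2_small]] ev
    by (intro filterlim_inverse_at_top) (auto elim: eventually_mono)
  then show ?thesis using filterlim_cong[OF refl refl, of _ _ F] ev by (auto elim: eventually_mono)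
qed


abbreviation Dom :: "(real \<Rightarrow> real) \<Rightarrow> real set" where
  "Dom f \<equiv> {x \<in> I. f differentiable (at x within I)}"

abbreviation f1s :: "(real \<Rightarrow> real) \<Rightarrow> real \<Rightarrow> real" where
  "f1s f \<equiv> \<lambda>t. Wr I f phi2 t / W t"

abbreviation quot_deriv :: "(real \<Rightarrow> real) \<Rightarrow> real \<Rightarrow> real" where
  "quot_deriv f \<equiv> dI I (\<lambda>t. f t / phi2 t)"

lemma quotient_has_derivative:
  assumes x: "x \<in> Dom f"
  shows "((\<lambda>t. f t / phi2 t) has_real_derivative (q x * f1s f x)) (at x within I)"
    and "quot_deriv f x = q x * f1s f x"
proof -
  have xI: "x \<in> I" using x by simp
  have "((\<lambda>t. f t / phi2 t) has_real_derivative
      (dI I f x * phi2 x - f x * dI I phi2 x) / (phi2 x * phi2 x)) (at x within I)"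
    using has_real_derivative_dI x phi_has_derivative(2)[OF xI] phi2_nz xI by (intro DERIV_divide) auto
  moreover have "(dI I f x * phi2 x - f x * dI I phi2 x) / (phi2 x * phi2 x) = q x * f1s f x"
    using W_nz xI phi2_nz by (simp add: r_has_derivative(2)[OF xI] Wr_def power2_eq_square field_simps)
  ultimately show der: "((\<lambda>t. f t / phi2 t) has_real_derivative (q x * f1s f x)) (at x within I)" by simp
  show "quot_deriv f x = q x * f1s f x" by (rule dI_eqI[OF at_within_ivl_neq_bot[OF xI] der])
qed

lemma negligible_not_Dom:
  assumes f: "AC_loc T x0 f" and cd: "c \<in> I" "d \<in> I"
  shows "negligible ({c..d} - Dom f)"
proof (cases "c \<le> d")
  case True
  have "negligible {t\<in>{c..d}. \<not> f differentiable (at t)}"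
    using f cd True unfolding AC_loc_def by (intro abs_cont_on_differentiable_ae) auto
  moreover have "{c..d} - Dom f \<subseteq> {t\<in>{c..d}. \<not> f differentiable (at t)}"
    using atLeastAtMost_subset_ivl[OF cd] by (auto intro: differentiable_at_withinI)
  ultimately show ?thesis by (rule negligible_subset)
qed simp

abbreviation U :: "(real \<Rightarrow> real) \<Rightarrow> real \<Rightarrow> real \<Rightarrow> real" where
  "U f a \<equiv> \<lambda>t. f t / phi2 t - a * r t"

lemma U_abs_cont_on:
  assumes f: "AC_loc T x0 f" and cd: "c \<in> I" "d \<in> I" "c \<le> d"
  shows "abs_cont_on (U f a) c d"
proof -
  have sub: "{c..d} \<subseteq> I" by (rule atLeastAtMost_subset_ivl[OF cd(1,2)])
  have inv: "abs_cont_on (\<lambda>t. 1 / phi2 t) c d"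
  proof (rule abs_cont_on_has_derivative_continuous[OF _ _ sub])
    show "((\<lambda>t. 1 / phi2 t) has_real_derivative - dI I phi2 x / (phi2 x * phi2 x)) (at x within I)"
      if "x \<in> I" for x
      using DERIV_divide[OF DERIV_const phi_has_derivative(2)[OF that], of 1] phi2_nz that by simp
    show "continuous_on I (\<lambda>x. - dI I phi2 x / (phi2 x * phi2 x))"
      using phi2_nz by (intro continuous_intros phi2_C1 phi_continuous) auto
  qed
  have ar: "abs_cont_on (\<lambda>t. a * r t) c d"
  proof (rule abs_cont_on_has_derivative_continuous[OF _ _ sub])
    show "((\<lambda>t. a * r t) has_real_derivative a * q x) (at x within I)" if "x \<in> I" for x
      using r_has_derivative(1)[OF that] by (rule DERIV_cmult)
    have "continuous_on I (\<lambda>x. a * (- W x / (phi2 x)\<^sup>2))"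
      using phi2_nz unfolding Wr_def by (intro continuous_intros phi1_C1 phi2_C1 phi_continuous) auto
    then show "continuous_on I (\<lambda>x. a * q x)"
      using continuous_on_cong[OF refl, of I "\<lambda>x. a * q x" "\<lambda>x. a * (- W x / (phi2 x)\<^sup>2)"]
      by (simp add: r_has_derivative(2))
  qed
  have "abs_cont_on f c d" using f cd unfolding AC_loc_def by blast
  then have "abs_cont_on (\<lambda>t. f t * (1 / phi2 t) - a * r t) c d"
    by (rule abs_cont_on_diff[OF abs_cont_on_mult[OF _ inv] ar])
  then show ?thesis by simp
qed

lemma U_has_integral:
  assumes f: "AC_loc T x0 f" and cd: "c \<in> I" "d \<in> I" "c \<le> d"
  shows "((\<lambda>t. q t * (f1s f t - a)) has_integral (U f a d - U f a c)) {c..d}"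
proof (rule abs_cont_on_has_integral_derivative[OF U_abs_cont_on[OF assms] cd(3) negligible_not_Dom[OF f cd(1,2)]])
  fix x assume "x \<in> {c..d} - ({c..d} - Dom f)"
  then have x: "x \<in> Dom f" by auto
  have "(U f a has_real_derivative (q x * f1s f x - a * q x)) (at x within I)"
    using x by (intro DERIV_diff DERIV_cmult quotient_has_derivative(1) r_has_derivative(1)) auto
  then show "(U f a has_real_derivative q x * (f1s f x - a)) (at x within {c..d})"
    by (intro DERIV_subset[OF _ atLeastAtMost_subset_ivl[OF cd(1,2)]]) (simp add: algebra_simps)
qed


lemma f1s_tendsto_iff_smallo:
  "(f1s f \<longlongrightarrow> a) (inf F (principal (Dom f))) \<longleftrightarrow>
     (\<lambda>x. quot_deriv f x - a * q x) \<in> o[inf F (principal (Dom f))](q)"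
  by (rule tendsto_iff_smallo_factor)
    (auto simp: eventually_inf_principal quotient_has_derivative(2) q_nonzero)

lemma U_tendsto_iff_smallo:
  "(U f a \<longlongrightarrow> a2) F \<longleftrightarrow> (\<lambda>x. f x - a * phi1 x - a2 * phi2 x) \<in> o[F](phi2)"
  by (rule tendsto_iff_smallo_factor; use eventually_in_I in \<open>rule eventually_mono\<close>)
    (use phi2_nz in \<open>auto simp: field_simps\<close>)

lemma smallo_phi1_if_smallo_q:
  assumes f: "AC_loc T x0 f" and small: "(\<lambda>x. quot_deriv f x - a * q x) \<in> o[inf F (principal (Dom f))](q)"
  shows "(\<lambda>x. f x - a * phi1 x) \<in> o[F](phi1)"
proof -
  have "(\<lambda>t. q t * (f1s f t - a)) \<in> o[inf F (principal (Dom f))](q)"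
    using small by (subst landau_o.small.in_cong[where g = "\<lambda>x. quot_deriv f x - a * q x"])
      (auto simp: eventually_inf_principal quotient_has_derivative(2) algebra_simps)
  then have "U f a \<in> o[F](r)"
    by (intro smallo_of_integral_smallo[OF T_x0 U_has_integral[OF f] q_has_integral q_sign abs_r_at_top
          negligible_not_Dom[OF f]])
  then have "(\<lambda>x. phi2 x * U f a x) \<in> o[F](\<lambda>x. phi2 x * r x)" by (rule landau_o.small.mult_left)
  moreover have "eventually (\<lambda>x. phi2 x * U f a x = f x - a * phi1 x) F"
    and "eventually (\<lambda>x. phi2 x * r x = phi1 x) F"
    using eventually_in_I by (eventually_elim, use phi2_nz in \<open>simp add: field_simps\<close>)+
  ultimately show ?thesis using landau_o.small.in_cong landau_o.small.cong by metis
qed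

lemma U_has_integral_above:
  assumes f: "AC_loc T x0 f" and c: "c \<in> I"
  shows "\<And>y. c \<le> y \<Longrightarrow> ereal y < x0 \<Longrightarrow> ((\<lambda>t. q t * (f1s f t - a)) has_integral (U f a y - U f a c)) {c..y}"
  using U_has_integral[OF f c] c by (auto simp: ivl_def)

lemma tendsto_and_imp_conv_iff:
  assumes f: "AC_loc T x0 f"
  shows "((f1s f \<longlongrightarrow> a) (inf F (principal (Dom f))) \<and> imp_conv x0 T (\<lambda>t. q t * (f1s f t - a)))
     \<longleftrightarrow> (\<exists>a2. (\<lambda>x. f x - a * phi1 x - a2 * phi2 x) \<in> o[F](phi2)
               \<and> (\<lambda>x. quot_deriv f x - a * q x) \<in> o[inf F (principal (Dom f))](q))"
  using imp_conv_iff_tendsto[OF T_x0 U_has_integral_above[OF f]] T_x0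
    f1s_tendsto_iff_smallo U_tendsto_iff_smallo by (auto simp: ivl_def)

lemma integral_representation:
  assumes f: "AC_loc T x0 f" and small: "(\<lambda>x. f x - a * phi1 x - a2 * phi2 x) \<in> o[F](phi2)"
    and x: "x \<in> I"
  shows "f x = a * phi1 x + a2 * phi2 x - phi2 x * imp_int x0 x (\<lambda>t. q t * (f1s f t - a))"
proof -
  have "ereal x < x0" using x by (simp add: ivl_def)
  then have "imp_int x0 x (\<lambda>t. q t * (f1s f t - a)) = a2 - U f a x"
    using U_has_integral_above[OF f x] small U_tendsto_iff_smallo by (intro imp_int_eq_lim) auto
  then show ?thesis using phi2_nz x by (simp add: field_simps)
qed

end

theorem theorem4p3:
  fixes T :: real and x0 :: ereal and phi1 phi2 f :: "real \<Rightarrow> real"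
  defines "I \<equiv> ivl T x0"
  defines "F \<equiv> to_x0 x0"
  defines "D \<equiv> {x \<in> I. f differentiable (at x within I)}"
  defines "FD \<equiv> inf F (principal D)"
  defines "W \<equiv> Wr I phi1 phi2"
  defines "f1s \<equiv> (\<lambda>t. Wr I f phi2 t / W t)"
  defines "q \<equiv> dI I (\<lambda>t. phi1 t / phi2 t)"
  defines "g' \<equiv> dI I (\<lambda>t. f t / phi2 t)"
  assumes T_x0: "ereal T < x0"
    and phi1_diff: "\<forall>x\<in>I. phi1 differentiable (at x within I)"
    and phi2_diff: "\<forall>x\<in>I. phi2 differentiable (at x within I)"
    and phi1_C1: "continuous_on I (dI I phi1)"
    and phi2_C1: "continuous_on I (dI I phi2)"
    and phi2_small: "phi2 \<in> o[F](phi1)"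
    and phi1_nz: "\<forall>x\<in>I. phi1 x \<noteq> 0"
    and phi2_nz: "\<forall>x\<in>I. phi2 x \<noteq> 0"
    and W_nz: "\<forall>x\<in>I. W x \<noteq> 0"
    and f_AC: "AC_loc T x0 f"
  shows
    "(\<forall>x\<in>D. ((\<lambda>t. f t / phi2 t) has_real_derivative (q x * f1s x)) (at x within I))
     \<and> (\<forall>a1::real.
          ((f1s \<longlongrightarrow> a1) FD
             \<longleftrightarrow> (\<lambda>x. g' x - a1 * q x) \<in> o[FD](q))
        \<and> ((\<lambda>x. g' x - a1 * q x) \<in> o[FD](q)
             \<longleftrightarrow> ((\<lambda>x. f x - a1 * phi1 x) \<in> o[F](phi1)
                  \<and> (\<lambda>x. g' x - a1 * q x) \<in> o[FD](q))))
     \<and> (\<forall>a1::real.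
          ((f1s \<longlongrightarrow> a1) FD \<and> imp_conv x0 T (\<lambda>t. q t * (f1s t - a1)))
          \<longleftrightarrow> (\<exists>a2::real. (\<lambda>x. f x - a1 * phi1 x - a2 * phi2 x) \<in> o[F](phi2)
                      \<and> (\<lambda>x. g' x - a1 * q x) \<in> o[FD](q)))
     \<and> (\<forall>a1 a2::real.
          ((f1s \<longlongrightarrow> a1) FD \<and> imp_conv x0 T (\<lambda>t. q t * (f1s t - a1))
           \<and> (\<lambda>x. f x - a1 * phi1 x - a2 * phi2 x) \<in> o[F](phi2)
           \<and> (\<lambda>x. g' x - a1 * q x) \<in> o[FD](q))
          \<longrightarrow> (\<forall>x\<in>I. f x = a1 * phi1 x + a2 * phi2 x
                         - phi2 x * imp_int x0 x (\<lambda>t. q t * (f1s t - a1))))"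
proof -
  interpret asymptotic_scale T x0 phi1 phi2
    by unfold_locales
      (use T_x0 phi1_diff phi2_diff phi1_C1 phi2_C1 phi2_small phi1_nz phi2_nz W_nz in
        \<open>simp_all add: I_def F_def W_def\<close>)
  show ?thesis
    unfolding I_def F_def D_def FD_def W_def f1s_def q_def g'_def
    using quotient_has_derivative(1) f1s_tendsto_iff_smallo smallo_phi1_if_smallo_q[OF f_AC]
      tendsto_and_imp_conv_iff[OF f_AC] integral_representation[OF f_AC]
    by blast
qed

end
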